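(* Let $K$ be a real quadratic field, let $n,f,m\in\mathbb{Z}_{\geq 1}$, and let $\mathcal{O}\supseteq\mathcal{O}'$ be the orders of $K$ with $\mathrm{cond}(\mathcal{O})=m$ and $\mathrm{cond}(\mathcal{O}')=nm$. Set $\mathfrak{f}=f\mathcal{O}$ and $\mathfrak{f}'=f\mathcal{O}'$. (i) For every $\mathfrak{a}\in I_{\mathcal{O}}(n\mathfrak{f})$, the lattice $\mathfrak{a}\cap\mathcal{O}'$ is $\mathcal{O}'$-invertible. Moreover the map $\Theta:I_{\mathcal{O}}(n\mathfrak{f})\to I_{\mathcal{O}'}(\mathfrak{f}')$, $\Theta(\mathfrak{a})=\mathfrak{a}\cap\mathcal{O}'$, is multiplicative: $\Theta(\mathfrak{a}\mathfrak{a}')=\Theta(\mathfrak{a})\Theta(\mathfrak{a}')$ for all $\mathfrak{a},\mathfrak{a}'\in I_{\mathcal{O}}(n\mathfrak{f})$. (ii) If $\mathfrak{a},\mathfrak{a}'\in I_{\mathcal{O}}(n\mathfrak{f})$ satisfy $\mathfrak{a}\sim_{nf}\mathfrak{a}'$, then $\Theta(\mathfrak{a})\sim_f\Theta(\mathfrak{a}')$; consequently $\Theta$ induces a well-defined surjective map $\widetilde{\Theta}:C_{\mathcal{O}}(n\mathfrak{f})\to C_{\mathcal{O}'}(\mathfrak{f}')$.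
   Context: For a positive integer $k$, $\mathcal{O}_k=\mathbb{Z}+k\omega\mathbb{Z}$ denotes the unique order of $K$ of conductor $k$, where $\mathcal{O}_K=\mathbb{Z}+\omega\mathbb{Z}$. A lattice is a free $\mathbb{Z}$-submodule of rank 2 of $K$; for a lattice $L$, $\mathrm{End}_K(L)=\{\lambda\in K:\lambda L\subseteq L\}$ and $L^{-1}=\{\lambda\in K:\lambda L\subseteq\mathrm{End}_K(L)\}$. An $\mathcal{O}$-ideal is a lattice stable under $\mathcal{O}$; it is invertible ($\mathcal{O}$-invertible) if its endomorphism ring equals $\mathcal{O}$. For an $\mathcal{O}$-ideal $\mathfrak{g}\subseteq\mathcal{O}$, $I_{\mathcal{O}}(\mathfrak{g})$ is the set of invertible $\mathcal{O}$-ideals $\mathfrak{b}\subseteq\mathcal{O}$ with $\mathfrak{b}+\mathfrak{g}=\mathcal{O}$. For lattices $L_1,L_2$ and a positive integer $g$, $L_1\sim_g L_2$ means there is a totally positive $\lambda\in L_1^{-1}g+1$ with $\lambda L_1=L_2$ (totally positive: $\lambda>0$ and its Galois conjugate $\lambda^\sigma>0$); for $\mathfrak{g}=g\mathcal{O}$ the relation $\sim_{\mathfrak{g}}$ on invertible $\mathcal{O}$-ideals is the same as $\sim_g$. The narrow extended class group is $C_{\mathcal{O}}(\mathfrak{g})=I_{\mathcal{O}}(\mathfrak{g})/\sim_{\mathfrak{g}}$. *)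

theory Defs
  imports Complex_Main "HOL-Computational_Algebra.Squarefree"
begin

definition qf_K :: "int \<Rightarrow> real set" where
  "qf_K d = {of_rat a + of_rat b * sqrt (of_int d) | a b. True}"

definition qf_conj :: "int \<Rightarrow> real \<Rightarrow> real" where
  "qf_conj d x = (THE y. \<exists>a b. x = of_rat a + of_rat b * sqrt (of_int d)
                               \<and> y = of_rat a - of_rat b * sqrt (of_int d))"

definition totally_positive :: "int \<Rightarrow> real \<Rightarrow> bool" where
  "totally_positive d x \<longleftrightarrow> x > 0 \<and> qf_conj d x > 0"

text \<open>omega with O_K = Z + omega Z.\<close>
definition qf_omega :: "int \<Rightarrow> real" where
  "qf_omega d = (if d mod 4 = 1 then (1 + sqrt (of_int d)) / 2 else sqrt (of_int d))"

text \<open>The order of conductor k: Z + k omega Z.\<close>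
definition qf_order :: "int \<Rightarrow> nat \<Rightarrow> real set" where
  "qf_order d k = {of_int a + of_int b * of_nat k * qf_omega d | a b. True}"

definition is_lattice :: "int \<Rightarrow> real set \<Rightarrow> bool" where
  "is_lattice d L \<longleftrightarrow> (\<exists>u v. u \<in> qf_K d \<and> v \<in> qf_K d
      \<and> (\<forall>a b :: int. of_int a * u + of_int b * v = 0 \<longrightarrow> a = 0 \<and> b = 0)
      \<and> L = {of_int a * u + of_int b * v | a b. True})"

definition lat_End :: "int \<Rightarrow> real set \<Rightarrow> real set" where
  "lat_End d L = {c \<in> qf_K d. \<forall>x\<in>L. c * x \<in> L}"

definition lat_inv :: "int \<Rightarrow> real set \<Rightarrow> real set" where
  "lat_inv d L = {c \<in> qf_K d. \<forall>x\<in>L. c * x \<in> lat_End d L}"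

definition is_ideal :: "int \<Rightarrow> real set \<Rightarrow> real set \<Rightarrow> bool" where
  "is_ideal d Ok L \<longleftrightarrow> is_lattice d L \<and> (\<forall>r\<in>Ok. \<forall>x\<in>L. r * x \<in> L)"

definition is_invertible_ideal :: "int \<Rightarrow> real set \<Rightarrow> real set \<Rightarrow> bool" where
  "is_invertible_ideal d Ok L \<longleftrightarrow> is_ideal d Ok L \<and> lat_End d L = Ok"

definition lat_sum :: "real set \<Rightarrow> real set \<Rightarrow> real set" where
  "lat_sum A B = {x + y | x y. x \<in> A \<and> y \<in> B}"

definition lat_mult :: "real set \<Rightarrow> real set \<Rightarrow> real set" where
  "lat_mult A B = {z. \<exists>(n::nat) xs ys. z = (\<Sum>i<n. xs i * ys i)
                         \<and> (\<forall>i<n. xs i \<in> A \<and> ys i \<in> B)}"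

definition lat_scale :: "real \<Rightarrow> real set \<Rightarrow> real set" where
  "lat_scale c L = (\<lambda>x. c * x) ` L"

definition I_ord :: "int \<Rightarrow> real set \<Rightarrow> real set \<Rightarrow> real set set" where
  "I_ord d Ok G = {B. is_invertible_ideal d Ok B \<and> B \<subseteq> Ok \<and> lat_sum B G = Ok}"

definition lat_equiv :: "int \<Rightarrow> nat \<Rightarrow> real set \<Rightarrow> real set \<Rightarrow> bool" where
  "lat_equiv d g L1 L2 \<longleftrightarrow> (\<exists>c. c \<in> {of_nat g * u + 1 | u. u \<in> lat_inv d L1}
       \<and> totally_positive d c \<and> lat_scale c L1 = L2)"

end

theory Submission
  imports Defs
begin

text \<open>An ideal \<open>a\<close> of \<open>O\<close> prime to \<open>n f\<close>
  contains an \<open>x\<close> with \<open>1 = x + n f z\<close>, \<open>z \<in> O\<close>; then \<open>x \<in> O'\<close>, and this single decomposition shows that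
  \<open>a \<inter> O'\<close> is an invertible \<open>O'\<close>-ideal prime to \<open>f\<close>, that restriction is multiplicative (using the
  squared decomposition) and that \<open>\<lambda> = 1 + n f u\<close> with \<open>\<lambda> a = a'\<close> also maps \<open>a \<inter> O'\<close> onto \<open>a' \<inter> O'\<close>.

  For surjectivity, write an invertible \<open>O'\<close>-ideal \<open>b\<close> prime to \<open>f\<close> in Hermite normal form. Invertibility
  makes its binary quadratic form primitive, so it represents a value prime to the part \<open>n\<^sub>2\<close> of \<open>n\<close>
  coprime to \<open>f\<close>. This yields a totally positive \<open>\<mu> \<equiv> 1\<close> modulo \<open>f\<close> on \<open>b\<close> with \<open>\<mu> b\<close> prime to \<open>n f\<close>;
  then \<open>b \<sim>\<^sub>f \<mu> b = (\<mu> b O) \<inter> O'\<close> and \<open>\<mu> b O\<close> is an ideal of \<open>O\<close> prime to \<open>n f\<close>.\<close>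

section \<open>Integer arithmetic\<close>

lemma sqrt_squarefree_not_rat:
  fixes d :: int
  assumes "d > 1" "squarefree d"
  shows "sqrt (of_int d) \<notin> \<rat>"
proof
  assume "sqrt (of_int d) \<in> \<rat>"
  then obtain m n :: nat where n: "n \<noteq> 0" and sq: "\<bar>sqrt (of_int d)\<bar> = m / n" and cop: "coprime m n"
    by (rule Rats_abs_nat_div_natE)
  have "real m = sqrt (of_int d) * n" using n sq assms(1) by (simp add: field_simps)
  then have "real m ^ 2 = of_int d * real n ^ 2" using assms(1) by (simp add: power_mult_distrib)
  then have eq: "int m ^ 2 = d * int n ^ 2" by (metis of_int_eq_iff of_int_mult of_int_of_nat_eq of_int_power)
  have "int n dvd int m ^ 2" using eq by (simp add: power2_eq_square)
  moreover have "coprime (int n) (int m ^ 2)" using cop by (simp add: coprime_commute)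
  ultimately have "is_unit (int n)" by (metis coprime_common_divisor dvd_refl)
  then have "n = 1" by simp
  then have "int m ^ 2 = d" using eq by simp
  then have "int m ^ 2 dvd d" by simp
  then have "int m dvd 1" using assms(2) squarefreeD by blast
  then have "d = 1" using \<open>int m ^ 2 = d\<close> by auto
  then show False using assms by simp
qed

lemma int_add_subgroup_eq_multiples:
  fixes G :: "int set"
  assumes "0 \<in> G" and add: "\<And>x y. x \<in> G \<Longrightarrow> y \<in> G \<Longrightarrow> x + y \<in> G"
    and uminus: "\<And>x. x \<in> G \<Longrightarrow> - x \<in> G" and "g \<in> G" "g \<noteq> 0"
  shows "\<exists>c>0. \<forall>x. x \<in> G \<longleftrightarrow> c dvd x"
proof -
  have mult: "c * j \<in> G" if "c \<in> G" for c j
  proof (induction j rule: int_induct[where k=0])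
    case base then show ?case using \<open>0 \<in> G\<close> by simp
  next
    case (step1 i) then show ?case using add that by (simp add: distrib_left)
  next
    case (step2 i)
    have "c * i + - c \<in> G" using add uminus that step2 by blast
    then show ?case by (simp add: algebra_simps)
  qed
  define c where "c = (LEAST c::nat. c > 0 \<and> int c \<in> G)"
  have "nat \<bar>g\<bar> > 0 \<and> int (nat \<bar>g\<bar>) \<in> G" using assms(4,5) uminus by (cases "g \<ge> 0") auto
  then have c: "c > 0 \<and> int c \<in> G" unfolding c_def by (rule LeastI)
  have c_min: "c \<le> c'" if "c' > 0 \<and> int c' \<in> G" for c' unfolding c_def using that by (rule Least_le)
  have "x \<in> G \<longleftrightarrow> int c dvd x" for x
  proof
    assume "x \<in> G"
    have "x mod int c = x + - (int c * (x div int c))" by (simp add: minus_mult_div_eq_mod)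
    also have "\<dots> \<in> G" using add uminus mult c \<open>x \<in> G\<close> by blast
    finally have "x mod int c \<in> G" .
    have "0 \<le> x mod int c" "x mod int c < int c" using c by auto
    have "x mod int c = 0"
    proof (rule ccontr)
      assume "x mod int c \<noteq> 0"
      then have "c \<le> nat (x mod int c)" using c_min \<open>x mod int c \<in> G\<close> \<open>0 \<le> x mod int c\<close> by simp
      then show False using \<open>x mod int c < int c\<close> \<open>0 \<le> x mod int c\<close> by (simp add: le_nat_iff)
    qed
    then show "int c dvd x" by auto
  next
    assume "int c dvd x"
    then show "x \<in> G" using mult c by auto
  qed
  then show ?thesis using c by (intro exI[of _ "int c"]) simp
qed

lemma coprime_if_no_common_prime:
  fixes a b :: int
  assumes "b \<noteq> 0" "\<And>p. prime p \<Longrightarrow> p dvd b \<Longrightarrow> \<not> p dvd a"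
  shows "coprime a b"
proof (rule ccontr)
  assume "\<not> coprime a b"
  then have "\<not> is_unit (gcd a b)" by (simp add: coprime_iff_gcd_eq_1)
  moreover have "gcd a b \<noteq> 0" using assms(1) by simp
  ultimately obtain p where "p dvd gcd a b" "prime p" using prime_divisor_exists by blast
  then show False using assms(2) by auto
qed

lemma dvd_prod_primes_iff:
  fixes P :: "int set"
  assumes "finite P" "\<And>p. p \<in> P \<Longrightarrow> prime p" "prime q"
  shows "q dvd (\<Prod>p\<in>P. p) \<longleftrightarrow> q \<in> P"
proof -
  have "q dvd (\<Prod>p\<in>P. p) \<longleftrightarrow> (\<exists>p\<in>P. q dvd p)" using prime_dvd_prod_iff[OF assms(1,3)] by simp
  also have "\<dots> \<longleftrightarrow> q \<in> P"
  proof
    assume "\<exists>p\<in>P. q dvd p"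
    then obtain p where "p \<in> P" "q dvd p" by blast
    then show "q \<in> P" using primes_dvd_imp_eq[OF assms(3) assms(2)] by metis
  qed (use dvd_refl in blast)
  finally show ?thesis .
qed

text \<open>Choosing \<open>x\<close> and \<open>y\<close> modulo \<open>p\<close> as below makes exactly one of the three terms prime to \<open>p\<close>.\<close>

lemma quadratic_form_not_dvd:
  fixes A B C x y p :: int
  assumes "prime p" "\<not> (p dvd A \<and> p dvd B \<and> p dvd C)"
    and dvd_x: "p dvd x \<longleftrightarrow> p dvd A \<and> \<not> p dvd C" and dvd_y: "p dvd y \<longleftrightarrow> \<not> p dvd A"
  shows "\<not> p dvd A*x*x + B*x*y + C*y*y"
proof
  assume pQ: "p dvd A*x*x + B*x*y + C*y*y"
  consider "p dvd A" "\<not> p dvd C" | "\<not> p dvd A" | "p dvd A" "p dvd C" by blast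
  then show False
  proof cases
    case 1
    then have "p dvd x" "\<not> p dvd y" using dvd_x dvd_y by auto
    then have "p dvd C*y*y" using pQ by (simp add: dvd_add_right_iff)
    then show False using 1 \<open>\<not> p dvd y\<close> assms(1) by (simp add: prime_dvd_mult_iff)
  next
    case 2
    then have "p dvd y" "\<not> p dvd x" using dvd_x dvd_y by auto
    then have "p dvd A*x*x" using pQ by (simp add: dvd_add_left_iff add.assoc)
    then show False using 2 \<open>\<not> p dvd x\<close> assms(1) by (simp add: prime_dvd_mult_iff)
  next
    case 3
    then have "\<not> p dvd x" "\<not> p dvd y" using dvd_x dvd_y by auto
    have "p dvd A*x*x" "p dvd C*y*y" using 3 by simp_all
    then have "p dvd B*x*y" using pQ by (metis dvd_add_right_iff add.commute)
    then have "p dvd B" using \<open>\<not> p dvd y\<close> \<open>\<not> p dvd x\<close> assms(1) by (simp add: prime_dvd_mult_iff)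
    then show False using assms(2) 3 by blast
  qed
qed

lemma quadratic_form_represents_coprime:
  fixes A B C N :: int
  assumes primitive: "\<And>p. prime p \<Longrightarrow> p dvd A \<Longrightarrow> p dvd B \<Longrightarrow> p dvd C \<Longrightarrow> False" and "N \<noteq> 0"
  obtains x y where "coprime (A*x*x + B*x*y + C*y*y) N"
proof -
  define P where "P = prime_factors N"
  have P: "finite P" "\<And>p. p \<in> P \<Longrightarrow> prime p" unfolding P_def by (auto simp: in_prime_factors_iff)
  define x where "x = (\<Prod>p\<in>{p\<in>P. p dvd A \<and> \<not> p dvd C}. p)"
  define y where "y = (\<Prod>p\<in>{p\<in>P. \<not> p dvd A}. p)"
  have "\<not> p dvd A*x*x + B*x*y + C*y*y" if "prime p" "p dvd N" for p
  proof (rule quadratic_form_not_dvd)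
    have "p \<in> P" unfolding P_def using that \<open>N \<noteq> 0\<close> by (simp add: in_prime_factors_iff)
    have "p dvd x \<longleftrightarrow> p \<in> {p\<in>P. p dvd A \<and> \<not> p dvd C}" unfolding x_def
      by (rule dvd_prod_primes_iff) (use P that in auto)
    then show "p dvd x \<longleftrightarrow> p dvd A \<and> \<not> p dvd C" using \<open>p \<in> P\<close> by auto
    have "p dvd y \<longleftrightarrow> p \<in> {p\<in>P. \<not> p dvd A}" unfolding y_def
      by (rule dvd_prod_primes_iff) (use P that in auto)
    then show "p dvd y \<longleftrightarrow> \<not> p dvd A" using \<open>p \<in> P\<close> by auto
  qed (use that primitive in auto)
  then have "coprime (A*x*x + B*x*y + C*y*y) N" by (rule coprime_if_no_common_prime[OF \<open>N \<noteq> 0\<close>])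
  then show ?thesis by (rule that)
qed

lemma nat_split_coprime_part:
  fixes n f :: nat
  assumes "n \<ge> 1"
  obtains n1 n2 k where "n = n1 * n2" "coprime n2 f" "n1 dvd f ^ k"
  using assms
proof (induction n arbitrary: thesis rule: less_induct)
  case (less n)
  show ?case
  proof (cases "coprime n f")
    case True
    then show ?thesis using less.prems(1)[of 1 n 0] by simp
  next
    case False
    then have "gcd n f \<noteq> 1" "gcd n f \<noteq> 0" using less.prems(2) by (auto simp: coprime_iff_gcd_eq_1)
    then obtain p where p: "prime p" "p dvd gcd n f" using prime_divisor_exists[of "gcd n f"] by auto
    then have "p dvd n" "p dvd f" by auto
    then obtain n' where n': "n = p * n'" by blast
    have "p > 1" using p prime_gt_1_nat by blast
    then have "n' < n" "n' \<ge> 1" using n' less.prems(2) by (auto simp: Suc_le_eq)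
    then obtain n1 n2 k where ih: "n' = n1 * n2" "coprime n2 f" "n1 dvd f ^ k" using less.IH by blast
    have "p * n1 dvd f ^ Suc k" using mult_dvd_mono[OF \<open>p dvd f\<close> ih(3)] by simp
    then show ?thesis using less.prems(1)[of "p * n1" n2 "Suc k"] ih n' by (simp add: mult.assoc)
  qed
qed

section \<open>Additive subgroups and products of lattices\<close>

lemma lat_mult_0: "0 \<in> lat_mult A B"
  unfolding lat_mult_def by (intro CollectI exI[of _ 0]) simp

lemma lat_mult_add_prod:
  assumes "w \<in> lat_mult A B" "x \<in> A" "y \<in> B"
  shows "w + x * y \<in> lat_mult A B"
proof -
  obtain n :: nat and xs ys where w: "w = (\<Sum>i<n. xs i * ys i)" "\<forall>i<n. xs i \<in> A \<and> ys i \<in> B"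
    using assms(1) unfolding lat_mult_def by blast
  have "(\<Sum>i<n. (xs(n := x)) i * (ys(n := y)) i) = w" unfolding w(1) by (rule sum.cong) auto
  then have "w + x * y = (\<Sum>i<Suc n. (xs(n := x)) i * (ys(n := y)) i)" by simp
  moreover have "\<forall>i<Suc n. (xs(n := x)) i \<in> A \<and> (ys(n := y)) i \<in> B"
    using w(2) assms(2,3) by (auto simp: less_Suc_eq)
  ultimately show ?thesis unfolding lat_mult_def by blast
qed

lemma lat_mult_induct [consumes 1, case_names zero add_prod]:
  assumes "w \<in> lat_mult A B" "P 0" "\<And>w x y. P w \<Longrightarrow> x \<in> A \<Longrightarrow> y \<in> B \<Longrightarrow> P (w + x * y)"
  shows "P w"
proof -
  obtain n :: nat and xs ys where w: "w = (\<Sum>i<n. xs i * ys i)" "\<forall>i<n. xs i \<in> A \<and> ys i \<in> B"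
    using assms(1) unfolding lat_mult_def by blast
  have "P (\<Sum>i<k. xs i * ys i)" if "k \<le> n" for k
    using that by (induction k) (use assms(2,3) w(2) in auto)
  then show ?thesis using w by simp
qed

lemma lat_mult_prod: "x \<in> A \<Longrightarrow> y \<in> B \<Longrightarrow> x * y \<in> lat_mult A B"
  using lat_mult_add_prod[OF lat_mult_0] by fastforce

lemma lat_mult_add:
  assumes "w1 \<in> lat_mult A B" "w2 \<in> lat_mult A B"
  shows "w1 + w2 \<in> lat_mult A B"
  using assms(2)
proof (induction rule: lat_mult_induct)
  case zero then show ?case using assms(1) by simp
next
  case (add_prod w x y)
  then show ?case using lat_mult_add_prod[of "w1 + w"] by (simp add: add.assoc)
qed

lemma lat_mult_subset:
  assumes "0 \<in> S" "\<And>x y. x \<in> S \<Longrightarrow> y \<in> S \<Longrightarrow> x + y \<in> S" "\<And>x y. x \<in> A \<Longrightarrow> y \<in> B \<Longrightarrow> x * y \<in> S"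
  shows "lat_mult A B \<subseteq> S"
proof
  fix w assume "w \<in> lat_mult A B"
  then show "w \<in> S" by (induction rule: lat_mult_induct) (use assms in auto)
qed

lemma lat_mult_scale:
  assumes "w \<in> lat_mult A B" "\<And>x. x \<in> A \<Longrightarrow> c * x \<in> A'" "\<And>y. y \<in> B \<Longrightarrow> e * y \<in> B'"
  shows "c * e * w \<in> lat_mult A' B'"
  using assms(1)
proof (induction rule: lat_mult_induct)
  case zero then show ?case using lat_mult_0 by simp
next
  case (add_prod w x y)
  then have "c * e * w + (c * x) * (e * y) \<in> lat_mult A' B'"
    using lat_mult_add_prod assms(2,3) by blast
  then show ?case by (simp add: algebra_simps)
qed

lemma lat_mult_mono:
  assumes "A \<subseteq> A'" "B \<subseteq> B'"
  shows "lat_mult A B \<subseteq> lat_mult A' B'"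
proof
  fix w assume "w \<in> lat_mult A B"
  then have "1 * 1 * w \<in> lat_mult A' B'" by (rule lat_mult_scale) (use assms in auto)
  then show "w \<in> lat_mult A' B'" by simp
qed

definition add_subgroup :: "real set \<Rightarrow> bool" where
  "add_subgroup S \<longleftrightarrow> 0 \<in> S \<and> (\<forall>x\<in>S. \<forall>y\<in>S. x + y \<in> S) \<and> (\<forall>x\<in>S. - x \<in> S)"

lemma add_subgroup_diff: "add_subgroup S \<Longrightarrow> x \<in> S \<Longrightarrow> y \<in> S \<Longrightarrow> x - y \<in> S"
  unfolding add_subgroup_def by (metis diff_conv_add_uminus)

definition lattice_span :: "real \<Rightarrow> real \<Rightarrow> real set" where
  "lattice_span u v = {of_int i * u + of_int j * v | i j. True}"

lemma lattice_spanI: "of_int i * u + of_int j * v \<in> lattice_span u v"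
  unfolding lattice_span_def by blast

lemma lattice_spanE:
  assumes "x \<in> lattice_span u v"
  obtains i j where "x = of_int i * u + of_int j * v"
  using assms unfolding lattice_span_def by blast

lemma lat_scale_lattice_span: "lat_scale c (lattice_span u v) = lattice_span (c * u) (c * v)"
proof (intro equalityI subsetI)
  fix x assume "x \<in> lat_scale c (lattice_span u v)"
  then obtain i j where "x = c * (of_int i * u + of_int j * v)" unfolding lat_scale_def by (blast elim: lattice_spanE)
  then show "x \<in> lattice_span (c * u) (c * v)" using lattice_spanI[of i "c * u" j "c * v"] by (simp add: algebra_simps)
next
  fix x assume "x \<in> lattice_span (c * u) (c * v)"
  then obtain i j where "x = of_int i * (c * u) + of_int j * (c * v)" by (rule lattice_spanE)
  then have "x = c * (of_int i * u + of_int j * v)" by (simp add: algebra_simps)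
  then show "x \<in> lat_scale c (lattice_span u v)" unfolding lat_scale_def using lattice_spanI by blast
qed

lemma add_subgroup_lattice_span: "add_subgroup (lattice_span u v)"
  unfolding add_subgroup_def
proof (intro conjI ballI)
  show "0 \<in> lattice_span u v" using lattice_spanI[of 0 u 0 v] by simp
next
  fix x y assume "x \<in> lattice_span u v" "y \<in> lattice_span u v"
  then obtain i j i' j' where "x = of_int i * u + of_int j * v" "y = of_int i' * u + of_int j' * v"
    by (meson lattice_spanE)
  then have "x + y = of_int (i + i') * u + of_int (j + j') * v" by (simp add: algebra_simps)
  then show "x + y \<in> lattice_span u v" by (simp only: lattice_spanI)
next
  fix x assume "x \<in> lattice_span u v"
  then obtain i j where "x = of_int i * u + of_int j * v" by (rule lattice_spanE)
  then have "- x = of_int (- i) * u + of_int (- j) * v" by simp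
  then show "- x \<in> lattice_span u v" by (simp only: lattice_spanI)
qed

section \<open>The field and its orders\<close>

locale real_quadratic_field =
  fixes d :: int
  assumes d_gt_1: "d > 1" and squarefree_d: "squarefree d"
begin

abbreviation sd :: real where "sd \<equiv> sqrt (of_int d)"
abbreviation om :: real where "om \<equiv> qf_omega d"

definition T :: int where "T = (if d mod 4 = 1 then 1 else 0)"
definition U :: int where "U = (if d mod 4 = 1 then (d - 1) div 4 else d)"

lemma sd_sq: "sd * sd = of_int d"
  using d_gt_1 by simp

lemma sd_not_rat: "sd \<notin> \<rat>"
  using sqrt_squarefree_not_rat d_gt_1 squarefree_d by blast

lemma om_sq: "om * om = of_int T * om + of_int U"
proof (cases "d mod 4 = 1")
  case True
  then have "4 dvd d - 1" by presburger
  then have "of_int ((d - 1) div 4) * 4 = (of_int d - 1 :: real)"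
    by (metis dvd_div_mult_self of_int_1 of_int_diff of_int_mult of_int_numeral)
  then show ?thesis using True sd_sq unfolding qf_omega_def T_def U_def by (simp add: field_simps)
next
  case False
  then show ?thesis using sd_sq unfolding qf_omega_def T_def U_def by simp
qed

lemma om_coords: "\<exists>p q. p \<in> \<rat> \<and> q \<in> \<rat> \<and> q \<noteq> 0 \<and> om = p + q * sd"
  unfolding qf_omega_def
  by (cases "d mod 4 = 1") (rule exI[of _ "1/2"], rule exI[of _ "1/2"], simp add: field_simps,
      rule exI[of _ 0], rule exI[of _ 1], simp)

lemma om_not_rat: "om \<notin> \<rat>"
proof
  assume "om \<in> \<rat>"
  obtain p q where pq: "p \<in> \<rat>" "q \<in> \<rat>" "q \<noteq> 0" "om = p + q * sd" using om_coords by blast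
  then have "sd = (om - p) / q" by simp
  also have "\<dots> \<in> \<rat>" using \<open>om \<in> \<rat>\<close> pq(1,2) by simp
  finally show False using sd_not_rat by simp
qed

lemma qf_K_iff: "x \<in> qf_K d \<longleftrightarrow> (\<exists>p q. p \<in> \<rat> \<and> q \<in> \<rat> \<and> x = p + q * sd)"
proof
  assume "x \<in> qf_K d"
  then obtain a b where "x = of_rat a + of_rat b * sd" unfolding qf_K_def by blast
  then show "\<exists>p q. p \<in> \<rat> \<and> q \<in> \<rat> \<and> x = p + q * sd" by (intro exI[of _ "of_rat a"] exI[of _ "of_rat b"]) simp
next
  assume "\<exists>p q. p \<in> \<rat> \<and> q \<in> \<rat> \<and> x = p + q * sd"
  then obtain p q where "p \<in> \<rat>" "q \<in> \<rat>" "x = p + q * sd" by blast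
  moreover obtain a b where "p = of_rat a" "q = of_rat b" using \<open>p \<in> \<rat>\<close> \<open>q \<in> \<rat>\<close> Rats_cases by metis
  ultimately show "x \<in> qf_K d" unfolding qf_K_def by blast
qed

lemma sd_coords_unique:
  assumes "p \<in> \<rat>" "q \<in> \<rat>" "p' \<in> \<rat>" "q' \<in> \<rat>" "p + q * sd = p' + q' * sd"
  shows "p = p' \<and> q = q'"
proof (cases "q = q'")
  case True then show ?thesis using assms by simp
next
  case False
  then have "sd = (p - p') / (q' - q)" using assms(5) by (simp add: field_simps)
  also have "\<dots> \<in> \<rat>" using assms by simp
  finally show ?thesis using sd_not_rat by simp
qed

lemma qf_K_add:
  assumes "x \<in> qf_K d" "y \<in> qf_K d"
  shows "x + y \<in> qf_K d"
proof -
  obtain p q where x: "p \<in> \<rat>" "q \<in> \<rat>" "x = p + q * sd" using assms(1) unfolding qf_K_iff by blast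
  obtain p' q' where y: "p' \<in> \<rat>" "q' \<in> \<rat>" "y = p' + q' * sd" using assms(2) unfolding qf_K_iff by blast
  show ?thesis unfolding qf_K_iff using x y by (intro exI[of _ "p + p'"] exI[of _ "q + q'"]) (simp add: algebra_simps)
qed

lemma qf_K_uminus:
  assumes "x \<in> qf_K d"
  shows "- x \<in> qf_K d"
proof -
  obtain p q where x: "p \<in> \<rat>" "q \<in> \<rat>" "x = p + q * sd" using assms unfolding qf_K_iff by blast
  show ?thesis unfolding qf_K_iff using x by (intro exI[of _ "- p"] exI[of _ "- q"]) simp
qed

lemma qf_K_diff: "x \<in> qf_K d \<Longrightarrow> y \<in> qf_K d \<Longrightarrow> x - y \<in> qf_K d"
  using qf_K_add qf_K_uminus by (metis diff_conv_add_uminus)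

lemma qf_K_mult:
  assumes "x \<in> qf_K d" "y \<in> qf_K d"
  shows "x * y \<in> qf_K d"
proof -
  obtain p q where x: "p \<in> \<rat>" "q \<in> \<rat>" "x = p + q * sd" using assms(1) unfolding qf_K_iff by blast
  obtain p' q' where y: "p' \<in> \<rat>" "q' \<in> \<rat>" "y = p' + q' * sd" using assms(2) unfolding qf_K_iff by blast
  have "x * y = p * p' + q * q' * (sd * sd) + (p * q' + q * p') * sd" unfolding x y by algebra
  also have "\<dots> = (p * p' + q * q' * of_int d) + (p * q' + q * p') * sd" by (simp only: sd_sq)
  finally show ?thesis unfolding qf_K_iff using x y
    by (intro exI[of _ "p * p' + q * q' * of_int d"] exI[of _ "p * q' + q * p'"]) simp
qed

lemma qf_K_of_rat: "x \<in> \<rat> \<Longrightarrow> x \<in> qf_K d"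
  unfolding qf_K_iff by (rule exI[of _ x], rule exI[of _ 0]) simp

lemma qf_K_of_int [simp]: "of_int k \<in> qf_K d"
  by (rule qf_K_of_rat) simp

lemma qf_K_of_nat [simp]: "of_nat k \<in> qf_K d"
  by (rule qf_K_of_rat) simp

lemma qf_K_one [simp]: "1 \<in> qf_K d"
  using qf_K_of_int[of 1] by simp

lemma qf_K_om: "om \<in> qf_K d"
  using om_coords unfolding qf_K_iff by blast

lemma conj_product: "(p + q * sd) * (p - q * sd) = p * p - q * q * of_int d"
proof -
  have "(p + q * sd) * (p - q * sd) = p * p - q * q * (sd * sd)" by algebra
  then show ?thesis by (simp only: sd_sq)
qed

lemma inverse_coords:
  assumes "p \<in> \<rat>" "q \<in> \<rat>" "p + q * sd \<noteq> 0"
  defines "N \<equiv> p * p - q * q * of_int d"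
  shows "N \<noteq> 0" and "inverse (p + q * sd) = p / N + (- q / N) * sd"
proof -
  show N: "N \<noteq> 0"
  proof
    assume "N = 0"
    then have "(p + q * sd) * (p - q * sd) = 0" unfolding N_def conj_product .
    then have "p + (- q) * sd = 0 + 0 * sd" using assms(3) by simp
    then show False using sd_coords_unique[of p "- q" 0 0] assms(1-3) by simp
  qed
  have "(p + q * sd) * ((p - q * sd) / N) = 1" using N conj_product[of p q] unfolding N_def
    by (simp add: mult.assoc[symmetric])
  then have "inverse (p + q * sd) = (p - q * sd) / N" by (rule inverse_unique)
  then show "inverse (p + q * sd) = p / N + (- q / N) * sd" by (simp add: diff_divide_distrib)
qed

lemma qf_K_inverse:
  assumes "x \<in> qf_K d"
  shows "inverse x \<in> qf_K d"
proof (cases "x = 0")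
  case False
  from assms obtain p q where "p \<in> \<rat>" "q \<in> \<rat>" "x = p + q * sd" unfolding qf_K_iff by blast
  then have "inverse x = p / (p * p - q * q * of_int d) + (- q / (p * p - q * q * of_int d)) * sd"
    using inverse_coords(2) False by simp
  then show ?thesis unfolding qf_K_iff using \<open>p \<in> \<rat>\<close> \<open>q \<in> \<rat>\<close>
    by (intro exI[of _ "p / (p * p - q * q * of_int d)"] exI[of _ "- q / (p * p - q * q * of_int d)"]) simp
qed (use qf_K_of_int[of 0] in simp)

lemma qf_K_divide: "x \<in> qf_K d \<Longrightarrow> y \<in> qf_K d \<Longrightarrow> x / y \<in> qf_K d"
  using qf_K_mult qf_K_inverse by (simp add: divide_inverse)

lemma qf_conj_coords:
  assumes "p \<in> \<rat>" "q \<in> \<rat>"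
  shows "qf_conj d (p + q * sd) = p - q * sd"
  unfolding qf_conj_def
proof (rule the_equality)
  obtain a b where "p = of_rat a" "q = of_rat b" using assms Rats_cases by metis
  then show "\<exists>a b. p + q * sd = of_rat a + of_rat b * sd \<and> p - q * sd = of_rat a - of_rat b * sd" by blast
next
  fix y assume "\<exists>a b. p + q * sd = of_rat a + of_rat b * sd \<and> y = of_rat a - of_rat b * sd"
  then obtain a b where "p + q * sd = of_rat a + of_rat b * sd" "y = of_rat a - of_rat b * sd" by blast
  then show "y = p - q * sd" using sd_coords_unique[of p q "of_rat a" "of_rat b"] assms by simp
qed

lemma qf_conj_add_of_int:
  assumes "x \<in> qf_K d"
  shows "qf_conj d (x + of_int k) = qf_conj d x + of_int k"
proof -
  from assms obtain p q where pq: "p \<in> \<rat>" "q \<in> \<rat>" "x = p + q * sd" unfolding qf_K_iff by blast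
  have "x + of_int k = (p + of_int k) + q * sd" using pq by simp
  then have "qf_conj d (x + of_int k) = (p + of_int k) - q * sd"
    by (simp only:) (rule qf_conj_coords, use pq in auto)
  then show ?thesis using pq qf_conj_coords by simp
qed

lemma qf_conj_inverse:
  assumes "x \<in> qf_K d"
  shows "qf_conj d (inverse x) = inverse (qf_conj d x)"
proof (cases "x = 0")
  case True
  then show ?thesis using qf_conj_coords[of 0 0] by simp
next
  case False
  from assms obtain p q where pq: "p \<in> \<rat>" "q \<in> \<rat>" "x = p + q * sd" unfolding qf_K_iff by blast
  define N where "N = p * p - q * q * of_int d"
  have N: "N \<noteq> 0" and inv: "inverse x = p / N + (- q / N) * sd"
    using inverse_coords[of p q] pq False unfolding N_def by auto
  have "qf_conj d (inverse x) = p / N - (- q / N) * sd"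
    unfolding inv using qf_conj_coords[of "p / N" "- q / N"] pq unfolding N_def by simp
  also have "\<dots> = (p + q * sd) / N" by (simp add: add_divide_distrib)
  also have "\<dots> = inverse (p - q * sd)"
    using N conj_product[of p q] unfolding N_def by (intro inverse_unique[symmetric]) (simp add: mult.commute)
  finally show ?thesis using qf_conj_coords pq by simp
qed

lemma is_lattice_iff:
  "is_lattice d L \<longleftrightarrow> (\<exists>u v. u \<in> qf_K d \<and> v \<in> qf_K d
      \<and> (\<forall>i j :: int. of_int i * u + of_int j * v = 0 \<longrightarrow> i = 0 \<and> j = 0) \<and> L = lattice_span u v)"
  unfolding is_lattice_def lattice_span_def ..

lemma is_lattice_D:
  assumes "is_lattice d L"
  shows "add_subgroup L" "L \<subseteq> qf_K d" "\<exists>z\<in>L. z \<noteq> 0"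
proof -
  obtain u v where uv: "u \<in> qf_K d" "v \<in> qf_K d" "\<forall>i j :: int. of_int i * u + of_int j * v = 0 \<longrightarrow> i = 0 \<and> j = 0"
    "L = lattice_span u v" using assms unfolding is_lattice_iff by blast
  show "add_subgroup L" unfolding uv(4) by (rule add_subgroup_lattice_span)
  show "L \<subseteq> qf_K d"
  proof
    fix x assume "x \<in> L"
    then obtain i j where "x = of_int i * u + of_int j * v" using uv(4) lattice_spanE by blast
    then show "x \<in> qf_K d" using uv(1,2) by (simp add: qf_K_add qf_K_mult)
  qed
  have "u \<in> L" unfolding uv(4) using lattice_spanI[of 1 u 0 v] by simp
  moreover have "u \<noteq> 0" using uv(3)[rule_format, of 1 0] by auto
  ultimately show "\<exists>z\<in>L. z \<noteq> 0" by blast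
qed

lemma is_lattice_scale:
  assumes "is_lattice d L" "c \<in> qf_K d" "c \<noteq> 0"
  shows "is_lattice d (lat_scale c L)"
proof -
  obtain u v where uv: "u \<in> qf_K d" "v \<in> qf_K d" "\<forall>i j :: int. of_int i * u + of_int j * v = 0 \<longrightarrow> i = 0 \<and> j = 0"
    "L = lattice_span u v" using assms(1) unfolding is_lattice_iff by blast
  have "lat_scale c L = lattice_span (c * u) (c * v)" unfolding uv(4) by (rule lat_scale_lattice_span)
  moreover have "of_int i * (c * u) + of_int j * (c * v) = 0 \<Longrightarrow> i = 0 \<and> j = 0" for i j :: int
  proof -
    assume "of_int i * (c * u) + of_int j * (c * v) = 0"
    then have "c * (of_int i * u + of_int j * v) = 0" by (simp add: algebra_simps)
    then show "i = 0 \<and> j = 0" using uv(3) assms(3) by simp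
  qed
  moreover have "c * u \<in> qf_K d" "c * v \<in> qf_K d" using uv(1,2) assms(2) qf_K_mult by auto
  ultimately show ?thesis unfolding is_lattice_iff by blast
qed

lemma lat_End_scale:
  assumes "c \<noteq> 0"
  shows "lat_End d (lat_scale c L) = lat_End d L"
proof -
  have "x * (c * y) \<in> lat_scale c L \<longleftrightarrow> x * y \<in> L" for x y
    using assms unfolding lat_scale_def by (auto simp: mult.left_commute)
  then have "(\<forall>y\<in>lat_scale c L. x * y \<in> lat_scale c L) \<longleftrightarrow> (\<forall>y\<in>L. x * y \<in> L)" for x
    unfolding lat_scale_def by blast
  then show ?thesis unfolding lat_End_def by simp
qed

definition om_k :: "nat \<Rightarrow> real" where "om_k k = of_nat k * om"

lemma qf_order_iff: "z \<in> qf_order d k \<longleftrightarrow> (\<exists>a b. z = of_int a + of_int b * om_k k)"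
  unfolding qf_order_def om_k_def by (simp add: mult.assoc)

lemma qf_orderI: "of_int a + of_int b * om_k k \<in> qf_order d k"
  unfolding qf_order_iff by blast

lemma om_k_sq: "om_k k * om_k k = of_int (int k * T) * om_k k + of_int (int k ^ 2 * U)"
proof -
  have "om_k k * om_k k = of_nat k ^ 2 * (om * om)" unfolding om_k_def by (simp add: power2_eq_square)
  also have "\<dots> = of_int (int k * T) * om_k k + of_int (int k ^ 2 * U)"
    unfolding om_sq om_k_def by (simp add: algebra_simps power2_eq_square)
  finally show ?thesis .
qed

lemma om_k_coords_unique:
  assumes "k > 0" "of_int a + of_int b * om_k k = of_int a' + of_int b' * om_k k"
  shows "a = a' \<and> b = b'"
proof (cases "b = b'")
  case False
  then have "om = (of_int a' - of_int a) / (of_int (b - b') * of_nat k)"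
    using assms unfolding om_k_def by (simp add: field_simps)
  also have "\<dots> \<in> \<rat>" by simp
  finally show ?thesis using om_not_rat by simp
qed (use assms in simp)

lemma om_k_in_qf_order: "om_k k \<in> qf_order d k"
  using qf_orderI[of 0 1 k] by simp

lemma qf_order_of_int [simp]: "of_int j \<in> qf_order d k"
  using qf_orderI[of j 0 k] by simp

lemma qf_order_of_nat [simp]: "of_nat j \<in> qf_order d k"
  using qf_order_of_int[of "int j"] by simp

lemma qf_order_zero [simp]: "0 \<in> qf_order d k"
  using qf_order_of_int[of 0] by simp

lemma qf_order_one [simp]: "1 \<in> qf_order d k"
  using qf_order_of_int[of 1] by simp

lemma qf_order_add:
  assumes "x \<in> qf_order d k" "y \<in> qf_order d k"
  shows "x + y \<in> qf_order d k"
proof -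
  obtain a b a' b' where "x = of_int a + of_int b * om_k k" "y = of_int a' + of_int b' * om_k k"
    using assms qf_order_iff by meson
  then have "x + y = of_int (a + a') + of_int (b + b') * om_k k" by (simp add: algebra_simps)
  then show ?thesis by (simp only: qf_orderI)
qed

lemma qf_order_uminus:
  assumes "x \<in> qf_order d k"
  shows "- x \<in> qf_order d k"
proof -
  obtain a b where "x = of_int a + of_int b * om_k k" using assms qf_order_iff by blast
  then have "- x = of_int (- a) + of_int (- b) * om_k k" by (simp add: algebra_simps)
  then show ?thesis by (simp only: qf_orderI)
qed

lemma qf_order_diff: "x \<in> qf_order d k \<Longrightarrow> y \<in> qf_order d k \<Longrightarrow> x - y \<in> qf_order d k"
  using qf_order_add qf_order_uminus by (metis diff_conv_add_uminus)

lemma qf_order_mult: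
  assumes "x \<in> qf_order d k" "y \<in> qf_order d k"
  shows "x * y \<in> qf_order d k"
proof -
  obtain a b a' b' where x: "x = of_int a + of_int b * om_k k" and y: "y = of_int a' + of_int b' * om_k k"
    using assms qf_order_iff by meson
  have "x * y = of_int (a * a') + of_int (a * b' + b * a') * om_k k + of_int (b * b') * (om_k k * om_k k)"
    unfolding x y by (simp add: algebra_simps)
  also have "\<dots> = of_int (a * a' + b * b' * (int k ^ 2 * U)) + of_int (a * b' + b * a' + b * b' * (int k * T)) * om_k k"
    unfolding om_k_sq by (simp add: algebra_simps)
  finally show ?thesis by (simp only: qf_orderI)
qed

lemma qf_order_subset_qf_K: "qf_order d k \<subseteq> qf_K d"
proof
  fix x assume "x \<in> qf_order d k"
  then obtain a b where "x = of_int a + of_int b * (of_nat k * om)" using qf_order_iff om_k_def by auto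
  then show "x \<in> qf_K d" by (simp add: qf_K_add qf_K_mult qf_K_om)
qed

lemma qf_order_in_qf_K: "x \<in> qf_order d k \<Longrightarrow> x \<in> qf_K d"
  using qf_order_subset_qf_K by blast

lemma om_k_shift_in_qf_K: "of_int r + om_k k \<in> qf_K d"
  using qf_order_in_qf_K qf_orderI[of r 1 k] by simp

lemma qf_order_conductor_mono: "qf_order d (n * k) \<subseteq> qf_order d k"
proof
  fix x assume "x \<in> qf_order d (n * k)"
  then obtain a b where "x = of_int a + of_int b * om_k (n * k)" using qf_order_iff by blast
  then have "x = of_int a + of_int (b * int n) * om_k k" unfolding om_k_def by (simp add: algebra_simps)
  then show "x \<in> qf_order d k" by (simp only: qf_orderI)
qed

lemma of_nat_mult_in_qf_order:
  assumes "x \<in> qf_order d k"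
  shows "of_nat n * x \<in> qf_order d (n * k)"
proof -
  obtain a b where "x = of_int a + of_int b * om_k k" using assms qf_order_iff by blast
  then have "of_nat n * x = of_int (int n * a) + of_int b * om_k (n * k)"
    unfolding om_k_def by (simp add: algebra_simps)
  then show ?thesis by (simp only: qf_orderI)
qed

lemma add_subgroup_qf_order: "add_subgroup (qf_order d k)"
  unfolding add_subgroup_def using qf_order_add qf_order_uminus by auto

lemma qf_order_exists_mult_of_int:
  assumes "k > 0" "z \<in> qf_order d k" "z \<noteq> 0"
  obtains z' N where "z' \<in> qf_order d k" "N \<noteq> 0" "z * z' = of_int N"
proof -
  obtain x y where z: "z = of_int x + of_int y * om_k k" using assms(2) qf_order_iff by blast
  define N where "N = x * x + x * y * (int k * T) - y * y * (int k ^ 2 * U)"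
  define z' where "z' = of_int (x + y * (int k * T)) + of_int (- y) * om_k k"
  have "z * z' = of_int (x * x + x * y * (int k * T)) - of_int (y * y) * (om_k k * om_k k)
      + of_int (y * y * (int k * T)) * om_k k"
    unfolding z z'_def by (simp add: algebra_simps)
  also have "\<dots> = of_int N" unfolding om_k_sq N_def by (simp add: algebra_simps)
  finally have zz': "z * z' = of_int N" .
  have "z' \<noteq> 0"
  proof
    assume "z' = 0"
    then have "of_int (x + y * (int k * T)) + of_int (- y) * om_k k = of_int 0 + of_int 0 * om_k k"
      unfolding z'_def by simp
    then have "y = 0 \<and> x = 0" using om_k_coords_unique[OF assms(1)] by fastforce
    then show False using z assms(3) by simp
  qed
  then have "N \<noteq> 0" using zz' assms(3) by (metis mult_eq_0_iff of_int_0)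
  then show ?thesis using that zz' qf_orderI unfolding z'_def by blast
qed

section \<open>Hermite normal form of ideals\<close>

definition order_stable :: "nat \<Rightarrow> real set \<Rightarrow> bool" where
  "order_stable k S \<longleftrightarrow> (\<forall>r\<in>qf_order d k. \<forall>x\<in>S. r * x \<in> S)"

lemma order_stable_if_is_ideal: "is_ideal d (qf_order d k) S \<Longrightarrow> order_stable k S"
  unfolding is_ideal_def order_stable_def by blast

text \<open>\<open>om_norm k r\<close> is the norm of \<open>r + \<omega>\<^sub>k\<close>, whose conjugate is \<open>r + k T - \<omega>\<^sub>k\<close>.\<close>

definition om_norm :: "nat \<Rightarrow> int \<Rightarrow> int" where
  "om_norm k r = r * r + r * (int k * T) - int k ^ 2 * U"

lemma om_norm_eq: "(of_int r + of_int (int k * T) - om_k k) * (of_int r + om_k k) = of_int (om_norm k r)"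
proof -
  have "(of_int r + of_int (int k * T) - om_k k) * (of_int r + om_k k)
     = of_int (r * r) + of_int (r * (int k * T)) + of_int (int k * T) * om_k k - om_k k * om_k k"
    by (simp add: algebra_simps)
  also have "\<dots> = of_int (om_norm k r)" unfolding om_k_sq om_norm_def by simp
  finally show ?thesis .
qed

lemma of_int_preimage_add_subgroup:
  assumes "add_subgroup S"
  defines "X \<equiv> {x::int. of_int x \<in> S}"
  shows "0 \<in> X" "\<And>x y. x \<in> X \<Longrightarrow> y \<in> X \<Longrightarrow> x + y \<in> X" "\<And>x. x \<in> X \<Longrightarrow> - x \<in> X"
  using assms unfolding add_subgroup_def X_def by auto

lemma om_coords_add_subgroup:
  fixes k :: nat
  assumes "add_subgroup S"
  defines "Y \<equiv> {y::int. \<exists>x::int. of_int x + of_int y * om_k k \<in> S}"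
  shows "0 \<in> Y" "\<And>y y'. y \<in> Y \<Longrightarrow> y' \<in> Y \<Longrightarrow> y + y' \<in> Y" "\<And>y. y \<in> Y \<Longrightarrow> - y \<in> Y"
proof -
  have S: "0 \<in> S" "\<And>x y. x \<in> S \<Longrightarrow> y \<in> S \<Longrightarrow> x + y \<in> S" "\<And>x. x \<in> S \<Longrightarrow> - x \<in> S"
    using assms(1) unfolding add_subgroup_def by auto
  show "0 \<in> Y" unfolding Y_def using S(1) by (intro CollectI exI[of _ 0]) simp
  show "y + y' \<in> Y" if y: "y \<in> Y" "y' \<in> Y" for y y'
  proof -
    obtain x x' where "of_int x + of_int y * om_k k \<in> S" "of_int x' + of_int y' * om_k k \<in> S"
      using y unfolding Y_def by blast
    then have "(of_int x + of_int y * om_k k) + (of_int x' + of_int y' * om_k k) \<in> S" by (rule S(2))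
    moreover have "(of_int x + of_int y * om_k k) + (of_int x' + of_int y' * om_k k)
        = of_int (x + x') + of_int (y + y') * om_k k" by (simp add: algebra_simps)
    ultimately have "of_int (x + x') + of_int (y + y') * om_k k \<in> S" by simp
    then show ?thesis unfolding Y_def by blast
  qed
  show "- y \<in> Y" if y: "y \<in> Y" for y
  proof -
    obtain x where "of_int x + of_int y * om_k k \<in> S" using y unfolding Y_def by blast
    then have "- (of_int x + of_int y * om_k k) \<in> S" by (rule S(3))
    then have "of_int (- x) + of_int (- y) * om_k k \<in> S" by simp
    then show ?thesis unfolding Y_def by blast
  qed
qed

lemma hnf_generators:
  assumes k: "k > 0" and sub: "S \<subseteq> qf_order d k" and sg: "add_subgroup S" and st: "order_stable k S"
    and z: "z \<in> S" "z \<noteq> 0"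
  obtains A C B where "A > 0" "C > 0" "\<And>x. of_int x \<in> S \<longleftrightarrow> A dvd x"
    "\<And>x y. of_int x + of_int y * om_k k \<in> S \<Longrightarrow> C dvd y" "of_int B + of_int C * om_k k \<in> S"
proof -
  define Y where "Y = {y::int. \<exists>x::int. of_int x + of_int y * om_k k \<in> S}"
  have mult: "\<And>r x. r \<in> qf_order d k \<Longrightarrow> x \<in> S \<Longrightarrow> r * x \<in> S" using st unfolding order_stable_def by auto
  obtain z' N where z': "z' \<in> qf_order d k" "N \<noteq> 0" "z * z' = of_int N"
    using qf_order_exists_mult_of_int[OF k _ z(2)] z(1) sub by blast
  have N: "N \<in> {x::int. of_int x \<in> S}" using mult[OF z'(1) z(1)] z'(3) by (simp add: mult.commute)
  obtain A where A: "A > 0" "\<And>x. x \<in> {x::int. of_int x \<in> S} \<longleftrightarrow> A dvd x"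
    using int_add_subgroup_eq_multiples[OF of_int_preimage_add_subgroup[OF sg] N z'(2)] by blast
  obtain x0 y0 where z0: "z = of_int x0 + of_int y0 * om_k k" using z sub qf_order_iff by blast
  obtain y1 where y1: "y1 \<in> Y" "y1 \<noteq> 0"
  proof (cases "y0 = 0")
    case False then show ?thesis using that[of y0] z0 z unfolding Y_def by blast
  next
    case True
    then have "om_k k * z = of_int 0 + of_int x0 * om_k k" "x0 \<noteq> 0" using z0 z by auto
    moreover have "om_k k * z \<in> S" using mult[OF om_k_in_qf_order z(1)] .
    ultimately have "of_int 0 + of_int x0 * om_k k \<in> S" by (simp only:)
    then have "x0 \<in> Y" unfolding Y_def by blast
    then show ?thesis using that \<open>x0 \<noteq> 0\<close> by blast
  qed
  obtain C where C: "C > 0" "\<And>y. y \<in> Y \<longleftrightarrow> C dvd y"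
    using int_add_subgroup_eq_multiples[OF om_coords_add_subgroup[OF sg, where k=k, folded Y_def] y1] by blast
  have "C \<in> Y" using C by simp
  then obtain B where B: "of_int B + of_int C * om_k k \<in> S" unfolding Y_def by blast
  have C_dvd: "C dvd y" if "of_int x + of_int y * om_k k \<in> S" for x y using that C(2) unfolding Y_def by blast
  show ?thesis by (rule that[OF A(1) C(1) _ C_dvd B]) (use A(2) in simp)
qed

lemma hnf_span:
  assumes sub: "S \<subseteq> qf_order d k" and sg: "add_subgroup S" and st: "order_stable k S"
    and A: "\<And>x. of_int x \<in> S \<longleftrightarrow> A dvd x" and C: "\<And>x y. of_int x + of_int y * om_k k \<in> S \<Longrightarrow> C dvd y"
    and B: "of_int B + of_int C * om_k k \<in> S"
  shows "S = lattice_span (of_int A) (of_int B + of_int C * om_k k)"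
proof
  have jB: "of_int j * (of_int B + of_int C * om_k k) \<in> S" for j
    using st B qf_order_of_int unfolding order_stable_def by blast
  show "S \<subseteq> lattice_span (of_int A) (of_int B + of_int C * om_k k)"
  proof
    fix s assume sS: "s \<in> S"
    then obtain x y where s: "s = of_int x + of_int y * om_k k" using sub qf_order_iff by blast
    then obtain j where j: "y = C * j" using sS C by (meson dvdE)
    have "s - of_int j * (of_int B + of_int C * om_k k) \<in> S" using add_subgroup_diff[OF sg sS jB] .
    moreover have "s - of_int j * (of_int B + of_int C * om_k k) = of_int (x - j * B)"
      unfolding s j by (simp add: algebra_simps)
    ultimately have "of_int (x - j * B) \<in> S" by (simp only:)
    then obtain i where "x - j * B = A * i" using A by (meson dvdE)
    then have "s = of_int i * of_int A + of_int j * (of_int B + of_int C * om_k k)"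
      unfolding s j by (simp add: algebra_simps)
    then show "s \<in> lattice_span (of_int A) (of_int B + of_int C * om_k k)" by (simp only: lattice_spanI)
  qed
  show "lattice_span (of_int A) (of_int B + of_int C * om_k k) \<subseteq> S"
  proof
    fix s assume "s \<in> lattice_span (of_int A) (of_int B + of_int C * om_k k)"
    then obtain i j where "s = of_int i * of_int A + of_int j * (of_int B + of_int C * om_k k)"
      by (rule lattice_spanE)
    moreover have "of_int i * of_int A \<in> S" using A[of "i * A"] by simp
    ultimately show "s \<in> S" using sg jB unfolding add_subgroup_def by blast
  qed
qed

lemma hnf:
  assumes k: "k > 0" and sub: "S \<subseteq> qf_order d k" and sg: "add_subgroup S" and st: "order_stable k S"
    and z: "z \<in> S" "z \<noteq> 0"
  obtains C a r where "C > 0" "a > 0" "a dvd om_norm k r"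
    "S = lattice_span (of_int (C * a)) (of_int C * (of_int r + om_k k))"
proof -
  obtain A C B where A_pos: "A > 0" and C_pos: "C > 0" and A: "\<And>x. of_int x \<in> S \<longleftrightarrow> A dvd x"
    and C: "\<And>x y. of_int x + of_int y * om_k k \<in> S \<Longrightarrow> C dvd y"
    and B: "of_int B + of_int C * om_k k \<in> S"
    by (rule hnf_generators[OF assms]) blast
  define w where "w = om_k k"
  define t where "t = int k * T"
  define u where "u = int k ^ 2 * U"
  have mult: "\<And>r x. r \<in> qf_order d k \<Longrightarrow> x \<in> S \<Longrightarrow> r * x \<in> S" using st unfolding order_stable_def by auto
  have "om_k k * of_int A \<in> S" using mult[OF om_k_in_qf_order] A[of A] by simp
  then have "of_int 0 + of_int A * om_k k \<in> S" by (simp add: mult.commute)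
  then have "C dvd A" by (rule C)
  then obtain a where a: "A = C * a" by blast
  have "w * (of_int B + of_int C * w) = of_int B * w + of_int C * (w * w)" by (simp add: algebra_simps)
  also have "\<dots> = of_int (C * u) + of_int (B + C * t) * w"
    unfolding w_def t_def u_def om_k_sq by (simp add: algebra_simps)
  finally have wB: "w * (of_int B + of_int C * w) = of_int (C * u) + of_int (B + C * t) * w" .
  have "of_int (C * u) + of_int (B + C * t) * om_k k \<in> S"
    using mult[OF om_k_in_qf_order B] wB unfolding w_def by simp
  then have "C dvd B + C * t" by (rule C)
  then have "C dvd B" by (simp add: dvd_add_left_iff)
  then obtain r where r: "B = C * r" by blast
  txt \<open>Reducing \<open>w (B + C w)\<close> by \<open>(r + t) (B + C w)\<close> leaves an integer, hence a multiple of \<open>A\<close>.\<close>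
  have "w * (of_int B + of_int C * w) - of_int (r + t) * (of_int B + of_int C * w) \<in> S"
    using add_subgroup_diff[OF sg mult[OF om_k_in_qf_order B] mult[OF qf_order_of_int B]] unfolding w_def .
  moreover have "w * (of_int B + of_int C * w) - of_int (r + t) * (of_int B + of_int C * w) = of_int (C * u - (r + t) * B)"
    unfolding wB by (simp add: r algebra_simps)
  ultimately have "of_int (C * u - (r + t) * B) \<in> S" by (simp only:)
  then have "A dvd C * u - (r + t) * B" using A by blast
  then have "C * a dvd C * (u - (r + t) * r)" unfolding a r by (simp add: algebra_simps)
  then have "a dvd u - (r + t) * r" using C_pos by simp
  moreover have "om_norm k r = - (u - (r + t) * r)" unfolding om_norm_def t_def u_def by (simp add: algebra_simps)
  ultimately have "a dvd om_norm k r" by (metis dvd_minus_iff)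
  moreover have "S = lattice_span (of_int (C * a)) (of_int C * (of_int r + om_k k))"
    using hnf_span[OF sub sg st A C B] unfolding a r by (simp add: algebra_simps)
  moreover have "a > 0" using a A_pos C_pos by (simp add: zero_less_mult_iff)
  ultimately show ?thesis using that C_pos by blast
qed

lemma is_lattice_hnf:
  assumes "k > 0" "C > 0" "a > 0"
  shows "is_lattice d (lattice_span (of_int (C * a)) (of_int C * (of_int r + om_k k)))"
  unfolding is_lattice_iff
proof (intro exI conjI allI impI)
  show "of_int (C * a) \<in> qf_K d" by (rule qf_K_of_int)
  show "of_int C * (of_int r + om_k k) \<in> qf_K d"
    using om_k_shift_in_qf_K by (intro qf_K_mult qf_K_of_int)
next
  fix i j :: int assume "of_int i * of_int (C * a) + of_int j * (of_int C * (of_int r + om_k k)) = (0::real)"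
  then have "of_int (i * C * a + j * C * r) + of_int (j * C) * om_k k = of_int 0 + of_int 0 * om_k k"
    by (simp add: algebra_simps)
  then have "i * C * a + j * C * r = 0 \<and> j * C = 0" using om_k_coords_unique[OF assms(1)] by blast
  then show "i = 0" "j = 0" using assms by auto
qed auto

lemma is_lattice_if_order_stable:
  assumes "k > 0" "S \<subseteq> qf_order d k" "add_subgroup S" "order_stable k S" "z \<in> S" "z \<noteq> 0"
  shows "is_lattice d S"
  using hnf[OF assms] is_lattice_hnf[OF assms(1)] by metis

text \<open>An invertible ideal in Hermite normal form is primitive: a common prime factor \<open>p\<close> of
  \<open>a\<close>, \<open>2 r + k T\<close> and \<open>c\<close> would make \<open>(r + \<omega>\<^sub>k) / p\<close> an endomorphism outside the order.\<close>

lemma hnf_primitive: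
  assumes k: "k > 0" and ac: "a * c = om_norm k r"
    and S: "S = lattice_span (of_int (C * a)) (of_int C * (of_int r + om_k k))"
    and End: "lat_End d S = qf_order d k"
    and p: "prime p" "p dvd a" "p dvd 2 * r + int k * T" "p dvd c"
  shows False
proof -
  define w where "w = om_k k"
  obtain a' b' c' where a': "a = p * a'" and b': "2 * r + int k * T = p * b'" and c': "c = p * c'"
    using p by (meson dvdE)
  have p0: "p \<noteq> 0" using p by auto
  define g where "g = (of_int r + w) / of_int p"
  have sq: "(of_int r + w) * (of_int r + w) = of_int (2 * r + int k * T) * (of_int r + w) - of_int (a * c)"
    using om_norm_eq[of r k] unfolding ac[symmetric] w_def by (simp add: algebra_simps)
  have "g \<in> lat_End d S" unfolding lat_End_def
  proof (intro CollectI conjI ballI)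
    show "g \<in> qf_K d" unfolding g_def w_def
      using om_k_shift_in_qf_K by (intro qf_K_divide qf_K_of_int)
  next
    fix s assume "s \<in> S"
    then obtain i j where s: "s = of_int i * of_int (C * a) + of_int j * (of_int C * (of_int r + w))"
      unfolding S w_def by (rule lattice_spanE)
    have "of_int p * (g * s) = (of_int r + w) * s" unfolding g_def using p0 by simp
    also have "\<dots> = of_int i * of_int C * of_int a * (of_int r + w)
        + of_int j * of_int C * ((of_int r + w) * (of_int r + w))"
      unfolding s by (simp add: algebra_simps)
    also have "\<dots> = of_int p * (of_int (- j * c') * of_int (C * a) + of_int (i * a' + j * b') * (of_int C * (of_int r + w)))"
      unfolding sq b' c' a' by (simp add: algebra_simps)
    finally have "g * s = of_int (- j * c') * of_int (C * a) + of_int (i * a' + j * b') * (of_int C * (of_int r + w))"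
      using p0 by simp
    then show "g * s \<in> S" unfolding S w_def by (simp only: lattice_spanI)
  qed
  then obtain x y where "g = of_int x + of_int y * om_k k" using End qf_order_iff by auto
  then have "of_int r + of_int 1 * om_k k = of_int (p * x) + of_int (p * y) * om_k k"
    unfolding g_def w_def using p0 by (simp add: field_simps)
  then have "p dvd 1" using om_k_coords_unique[OF k] by (metis dvd_triv_left)
  then show False using p(1) not_prime_unit by blast
qed

text \<open>For \<open>\<beta> = C (a x + y (r + \<omega>\<^sub>k))\<close> the element \<open>\<rho> = \<beta>' / (C\<^sup>2 a)\<close>, with \<open>\<beta>'\<close> the conjugate,
  satisfies \<open>\<rho> \<beta> = N(\<beta>) / (C\<^sup>2 a)\<close>, the value at \<open>(x, y)\<close> of the binary quadratic form attached to \<open>S\<close>.\<close>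

lemma hnf_conjugate_multiplier:
  fixes x y :: int
  assumes C: "C > 0" and a: "a > 0" and ac: "a * c = om_norm k r"
    and S: "S = lattice_span (of_int (C * a)) (of_int C * (of_int r + om_k k))"
  defines "\<beta> \<equiv> of_int x * of_int (C * a) + of_int y * (of_int C * (of_int r + om_k k))"
    and "\<rho> \<equiv> (of_int (a * x) + of_int y * (of_int (r + int k * T) - om_k k)) / of_int (C * a)"
  shows "\<beta> \<in> S" "\<rho> \<in> qf_K d" "\<rho> * \<beta> = of_int (a * x * x + (2 * r + int k * T) * x * y + c * y * y)"
    "\<forall>s\<in>S. \<rho> * s \<in> qf_order d k"
proof -
  define w where "w = om_k k"
  define t where "t = int k * T"
  define Z where "Z = (of_int r + of_int t - w) * (of_int r + w)"
  have Z: "Z = of_int (a * c)" unfolding Z_def ac w_def t_def by (rule om_norm_eq)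
  define P where "P = of_int (a * x) + of_int y * (of_int r + of_int t - w)"
  have Ca: "(of_int (C * a) :: real) \<noteq> 0" using C a by simp
  have CaP: "of_int (C * a) * \<rho> = P" unfolding \<rho>_def P_def w_def t_def using Ca by simp
  show "\<beta> \<in> S" unfolding S \<beta>_def by (rule lattice_spanI)
  show "\<rho> \<in> qf_K d" unfolding \<rho>_def
    using qf_order_in_qf_K[OF om_k_in_qf_order] by (intro qf_K_divide qf_K_add qf_K_mult qf_K_diff qf_K_of_int)
  have "of_int (C * a) * (\<rho> * \<beta>) = P * \<beta>" using CaP by (simp add: mult.assoc[symmetric])
  also have "\<dots> = of_int C * (of_int (a * x) * of_int (a * x) + of_int (a * x) * of_int y * of_int (2 * r + t)
      + of_int y * of_int y * Z)"
    unfolding P_def \<beta>_def Z_def w_def by (simp add: algebra_simps)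
  also have "\<dots> = of_int (C * a) * of_int (a * x * x + (2 * r + int k * T) * x * y + c * y * y)"
    unfolding Z t_def by (simp add: algebra_simps)
  finally show "\<rho> * \<beta> = of_int (a * x * x + (2 * r + int k * T) * x * y + c * y * y)" using Ca by simp
  show "\<forall>s\<in>S. \<rho> * s \<in> qf_order d k"
  proof
    fix s assume "s \<in> S"
    then obtain i j where s: "s = of_int i * of_int (C * a) + of_int j * (of_int C * (of_int r + w))"
      unfolding S w_def by (rule lattice_spanE)
    define E where "E = of_int (a * x * i + y * j * c) + of_int (x * j) * (of_int r + w)
      + of_int (y * i) * (of_int r + of_int t - w)"
    have "of_int (C * a) * (\<rho> * s) = P * s" using CaP by (simp add: mult.assoc[symmetric])
    also have "\<dots> = of_int C * (of_int a * of_int (a * x * i) + of_int a * of_int (x * j) * (of_int r + w)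
        + of_int a * of_int (y * i) * (of_int r + of_int t - w) + of_int (y * j) * Z)"
      unfolding P_def s Z_def by (simp add: algebra_simps)
    also have "\<dots> = of_int (C * a) * E" unfolding Z E_def by (simp add: algebra_simps)
    finally have "\<rho> * s = E" using Ca by simp
    moreover have "E \<in> qf_order d k" unfolding E_def w_def
      using om_k_in_qf_order by (intro qf_order_add qf_order_mult qf_order_of_int qf_order_diff) auto
    ultimately show "\<rho> * s \<in> qf_order d k" by simp
  qed
qed

lemma invertible_ideal_represents_coprime:
  assumes k: "k > 0" and b: "is_invertible_ideal d (qf_order d k) b" "b \<subseteq> qf_order d k" and "N \<noteq> 0"
  obtains \<rho> \<beta> Q where "\<rho> \<in> qf_K d" "\<beta> \<in> b" "\<rho> * \<beta> = of_int Q" "coprime Q N" "\<forall>s\<in>b. \<rho> * s \<in> qf_order d k"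
proof -
  have lat: "is_lattice d b" and st: "order_stable k b" and End: "lat_End d b = qf_order d k"
    using b(1) order_stable_if_is_ideal unfolding is_invertible_ideal_def is_ideal_def by auto
  obtain z where "z \<in> b" "z \<noteq> 0" using is_lattice_D(3)[OF lat] by blast
  then obtain C a r where Car: "C > 0" "a > 0" "a dvd om_norm k r"
    "b = lattice_span (of_int (C * a)) (of_int C * (of_int r + om_k k))"
    using hnf[OF k b(2) is_lattice_D(1)[OF lat] st] by blast
  obtain c where c: "a * c = om_norm k r" using Car(3) by (metis dvdE)
  have "\<not> (p dvd a \<and> p dvd 2 * r + int k * T \<and> p dvd c)" if "prime p" for p
    using hnf_primitive[OF k c Car(4) End that] by blast
  then obtain x y where "coprime (a * x * x + (2 * r + int k * T) * x * y + c * y * y) N"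
    using quadratic_form_represents_coprime[of a "2 * r + int k * T" c N] \<open>N \<noteq> 0\<close> by blast
  then show ?thesis using that hnf_conjugate_multiplier[OF Car(1,2) c Car(4)] by blast
qed

section \<open>Ideals prime to an integer\<close>

definition comax :: "nat \<Rightarrow> real set \<Rightarrow> int \<Rightarrow> bool" where
  "comax k I N \<longleftrightarrow> (\<exists>x\<in>I. \<exists>y\<in>qf_order d k. 1 = x + of_int N * y)"

lemma comax_mult:
  assumes "I \<subseteq> qf_order d k" "add_subgroup I" "order_stable k I" "comax k I A" "comax k I A'"
  shows "comax k I (A * A')"
proof -
  obtain x y where xy: "x \<in> I" "y \<in> qf_order d k" "1 = x + of_int A * y" using assms(4) comax_def by blast
  obtain x' y' where xy': "x' \<in> I" "y' \<in> qf_order d k" "1 = x' + of_int A' * y'" using assms(5) comax_def by blast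
  have "1 = (x + of_int A * y) * (x' + of_int A' * y')" using xy(3) xy'(3) by simp
  then have e: "1 = (x * x' + (of_int A' * y') * x + (of_int A * y) * x') + of_int (A * A') * (y * y')"
    by (simp add: algebra_simps)
  have mult: "\<And>r z. r \<in> qf_order d k \<Longrightarrow> z \<in> I \<Longrightarrow> r * z \<in> I" using assms(3) order_stable_def by blast
  have add: "\<And>u v. u \<in> I \<Longrightarrow> v \<in> I \<Longrightarrow> u + v \<in> I" using assms(2) add_subgroup_def by blast
  have "x * x' \<in> I" using mult xy(1) xy'(1) assms(1) by blast
  moreover have "(of_int A' * y') * x \<in> I" "(of_int A * y) * x' \<in> I"
    using mult qf_order_mult qf_order_of_int xy xy' by blast+
  ultimately have "x * x' + (of_int A' * y') * x + (of_int A * y) * x' \<in> I" using add by blast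
  moreover have "y * y' \<in> qf_order d k" using qf_order_mult xy(2) xy'(2) by blast
  ultimately show ?thesis unfolding comax_def using e by blast
qed

lemma comax_power:
  assumes "I \<subseteq> qf_order d k" "add_subgroup I" "order_stable k I" "comax k I A"
  shows "comax k I (A ^ j)"
proof (induction j)
  case 0
  have "0 \<in> I" "(1::real) = 0 + of_int (A ^ 0) * 1" using assms(2) add_subgroup_def by auto
  then show ?case unfolding comax_def using qf_order_one by blast
next
  case (Suc j)
  then show ?case using comax_mult[OF assms] by simp
qed

lemma comax_dvd:
  assumes "comax k I A" "A' dvd A"
  shows "comax k I A'"
proof -
  obtain x y where xy: "x \<in> I" "y \<in> qf_order d k" "1 = x + of_int A * y" using assms(1) comax_def by blast
  obtain q where "A = A' * q" using assms(2) by blast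
  then have "1 = x + of_int A' * (of_int q * y)" using xy(3) by (simp add: algebra_simps)
  moreover have "of_int q * y \<in> qf_order d k" using qf_order_mult[OF qf_order_of_int xy(2)] .
  ultimately show ?thesis unfolding comax_def using xy(1) by blast
qed

lemma I_ord_iff:
  "a \<in> I_ord d (qf_order d k) (lat_scale (of_nat N) (qf_order d k))
    \<longleftrightarrow> is_invertible_ideal d (qf_order d k) a \<and> a \<subseteq> qf_order d k \<and> comax k a (int N)"
proof
  assume a: "a \<in> I_ord d (qf_order d k) (lat_scale (of_nat N) (qf_order d k))"
  then have "1 \<in> lat_sum a (lat_scale (of_nat N) (qf_order d k))" unfolding I_ord_def by simp
  then have "comax k a (int N)" unfolding lat_sum_def lat_scale_def comax_def by auto
  then show "is_invertible_ideal d (qf_order d k) a \<and> a \<subseteq> qf_order d k \<and> comax k a (int N)"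
    using a unfolding I_ord_def by blast
next
  assume a: "is_invertible_ideal d (qf_order d k) a \<and> a \<subseteq> qf_order d k \<and> comax k a (int N)"
  then obtain x y where xy: "x \<in> a" "y \<in> qf_order d k" "1 = x + of_nat N * y" unfolding comax_def by auto
  have st: "order_stable k a" using a order_stable_if_is_ideal unfolding is_invertible_ideal_def by blast
  have "lat_sum a (lat_scale (of_nat N) (qf_order d k)) = qf_order d k"
  proof
    show "lat_sum a (lat_scale (of_nat N) (qf_order d k)) \<subseteq> qf_order d k"
      unfolding lat_sum_def lat_scale_def using a qf_order_add qf_order_mult qf_order_of_nat by blast
  next
    show "qf_order d k \<subseteq> lat_sum a (lat_scale (of_nat N) (qf_order d k))"
    proof
      fix r assume r: "r \<in> qf_order d k"
      have "r = r * (x + of_nat N * y)" using xy(3) by simp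
      then have "r = r * x + of_nat N * (r * y)" by (simp add: algebra_simps)
      moreover have "r * x \<in> a" using st r xy(1) unfolding order_stable_def by blast
      moreover have "r * y \<in> qf_order d k" using qf_order_mult r xy(2) by blast
      ultimately show "r \<in> lat_sum a (lat_scale (of_nat N) (qf_order d k))"
        unfolding lat_sum_def lat_scale_def by blast
    qed
  qed
  then show "a \<in> I_ord d (qf_order d k) (lat_scale (of_nat N) (qf_order d k))"
    using a unfolding I_ord_def by blast
qed

end

section \<open>Restriction from \<open>O\<close> to \<open>O'\<close>\<close>

locale order_pair = real_quadratic_field +
  fixes n f m :: nat
  assumes n_pos: "n \<ge> 1" and f_pos: "f \<ge> 1" and m_pos: "m \<ge> 1"
begin

abbreviation Ok :: "real set" where "Ok \<equiv> qf_order d m"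
abbreviation Oq :: "real set" where "Oq \<equiv> qf_order d (n * m)"

lemma Oq_subset_Ok: "Oq \<subseteq> Ok"
  by (rule qf_order_conductor_mono)

lemma of_nat_n_mult_in_Oq: "z \<in> Ok \<Longrightarrow> of_nat n * z \<in> Oq"
  by (rule of_nat_mult_in_qf_order)

lemma restriction_unit_decomp:
  assumes "a \<in> I_ord d Ok (lat_scale (of_nat (n * f)) Ok)"
  obtains x z where "x \<in> a \<inter> Oq" "z \<in> Ok" "1 = x + of_nat n * (of_nat f * z)"
proof -
  obtain x z where xz: "x \<in> a" "z \<in> Ok" "1 = x + of_nat (n * f) * z"
    using assms unfolding I_ord_iff comax_def by auto
  have "of_nat n * (of_nat f * z) \<in> Oq" using of_nat_n_mult_in_Oq qf_order_mult[OF qf_order_of_nat xz(2)] by blast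
  moreover have "x = 1 - of_nat n * (of_nat f * z)" using xz(3) by (simp add: algebra_simps)
  ultimately have "x \<in> Oq" using qf_order_diff[OF qf_order_one] by simp
  then show ?thesis using that xz by (simp add: mult.assoc)
qed

lemma I_ord_Ok_D:
  assumes "a \<in> I_ord d Ok (lat_scale (of_nat (n * f)) Ok)"
  shows "is_lattice d a" "order_stable m a" "lat_End d a = Ok" "a \<subseteq> Ok"
  using assms order_stable_if_is_ideal unfolding I_ord_iff is_invertible_ideal_def by (auto simp: is_ideal_def)

lemma order_stable_restriction:
  assumes a: "a \<in> I_ord d Ok (lat_scale (of_nat (n * f)) Ok)"
  shows "order_stable (n * m) (a \<inter> Oq)"
  unfolding order_stable_def
proof (intro ballI)
  fix r x assume "r \<in> Oq" "x \<in> a \<inter> Oq"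
  moreover have "r \<in> Ok" using \<open>r \<in> Oq\<close> Oq_subset_Ok by blast
  ultimately show "r * x \<in> a \<inter> Oq"
    using I_ord_Ok_D(2)[OF a] qf_order_mult[of r "n * m" x] unfolding order_stable_def by blast
qed

lemma of_nat_n_mult_in_restriction:
  assumes a: "a \<in> I_ord d Ok (lat_scale (of_nat (n * f)) Ok)" and "x \<in> a"
  shows "of_nat n * x \<in> a \<inter> Oq"
proof -
  have "x \<in> Ok" using I_ord_Ok_D(4)[OF a] \<open>x \<in> a\<close> by blast
  then show ?thesis
    using of_nat_n_mult_in_Oq I_ord_Ok_D(2)[OF a] \<open>x \<in> a\<close> qf_order_of_nat unfolding order_stable_def by blast
qed

lemma lat_End_restriction_subset:
  assumes a: "a \<in> I_ord d Ok (lat_scale (of_nat (n * f)) Ok)"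
  shows "lat_End d (a \<inter> Oq) \<subseteq> lat_End d a"
proof
  obtain x z where xz: "x \<in> a \<inter> Oq" "z \<in> Ok" "1 = x + of_nat n * (of_nat f * z)"
    using restriction_unit_decomp[OF a] .
  have st: "\<And>r y. r \<in> Ok \<Longrightarrow> y \<in> a \<Longrightarrow> r * y \<in> a" using I_ord_Ok_D(2)[OF a] unfolding order_stable_def by blast
  fix c assume "c \<in> lat_End d (a \<inter> Oq)"
  then have cK: "c \<in> qf_K d" and cS: "\<And>s. s \<in> a \<inter> Oq \<Longrightarrow> c * s \<in> a \<inter> Oq" unfolding lat_End_def by auto
  show "c \<in> lat_End d a" unfolding lat_End_def
  proof (intro CollectI conjI ballI)
    fix y assume y: "y \<in> a"
    have "c * y = c * y * (x + of_nat n * (of_nat f * z))" using xz(3) by simp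
    then have "c * y = (c * x) * y + c * (of_nat n * (of_nat f * z * y))" by (simp add: algebra_simps)
    moreover have "(c * x) * y \<in> a" using st[of "c * x" y] cS[OF xz(1)] y I_ord_Ok_D(4)[OF a] by blast
    moreover have "c * (of_nat n * (of_nat f * z * y)) \<in> a"
      using cS of_nat_n_mult_in_restriction[OF a st[OF qf_order_mult[OF qf_order_of_nat xz(2)] y]] by blast
    moreover have "\<And>u v. u \<in> a \<Longrightarrow> v \<in> a \<Longrightarrow> u + v \<in> a"
      using is_lattice_D(1)[OF I_ord_Ok_D(1)[OF a]] unfolding add_subgroup_def by blast
    ultimately show "c * y \<in> a" by simp
  qed (rule cK)
qed

lemma lat_End_restriction:
  assumes a: "a \<in> I_ord d Ok (lat_scale (of_nat (n * f)) Ok)"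
  shows "lat_End d (a \<inter> Oq) = Oq"
proof
  show "Oq \<subseteq> lat_End d (a \<inter> Oq)"
    using order_stable_restriction[OF a] unfolding lat_End_def order_stable_def
    using qf_order_subset_qf_K by blast
  show "lat_End d (a \<inter> Oq) \<subseteq> Oq"
  proof
    obtain x z where xz: "x \<in> a \<inter> Oq" "z \<in> Ok" "1 = x + of_nat n * (of_nat f * z)"
      using restriction_unit_decomp[OF a] .
    fix c assume c: "c \<in> lat_End d (a \<inter> Oq)"
    then have "c \<in> Ok" using lat_End_restriction_subset[OF a] I_ord_Ok_D(3)[OF a] by blast
    then have "of_nat n * (c * (of_nat f * z)) \<in> Oq"
      using of_nat_n_mult_in_Oq qf_order_mult qf_order_mult[OF qf_order_of_nat xz(2)] by blast
    moreover have "c * x \<in> Oq" using c xz(1) unfolding lat_End_def by blast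
    ultimately have "c * x + of_nat n * (c * (of_nat f * z)) \<in> Oq" by (simp add: qf_order_add)
    moreover have "c = c * (x + of_nat n * (of_nat f * z))" using xz(3) by simp
    then have "c = c * x + of_nat n * (c * (of_nat f * z))" by (simp add: algebra_simps)
    ultimately show "c \<in> Oq" by simp
  qed
qed

lemma restriction_invertible:
  assumes a: "a \<in> I_ord d Ok (lat_scale (of_nat (n * f)) Ok)"
  shows "is_invertible_ideal d Oq (a \<inter> Oq)"
proof -
  have st: "order_stable (n * m) (a \<inter> Oq)" by (rule order_stable_restriction[OF a])
  have sg: "add_subgroup (a \<inter> Oq)"
    using is_lattice_D(1)[OF I_ord_Ok_D(1)[OF a]] add_subgroup_qf_order unfolding add_subgroup_def by auto
  obtain z where z: "z \<in> a" "z \<noteq> 0" using is_lattice_D(3)[OF I_ord_Ok_D(1)[OF a]] by blast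
  then have "of_nat n * z \<in> a \<inter> Oq" "of_nat n * z \<noteq> 0"
    using of_nat_n_mult_in_restriction[OF a] n_pos by auto
  then have "is_lattice d (a \<inter> Oq)" using is_lattice_if_order_stable[OF _ _ sg st] n_pos m_pos by auto
  then show ?thesis using st lat_End_restriction[OF a]
    unfolding is_invertible_ideal_def is_ideal_def order_stable_def by blast
qed

lemma restriction_in_I_ord:
  assumes a: "a \<in> I_ord d Ok (lat_scale (of_nat (n * f)) Ok)"
  shows "a \<inter> Oq \<in> I_ord d Oq (lat_scale (of_nat f) Oq)"
proof -
  obtain x z where xz: "x \<in> a \<inter> Oq" "z \<in> Ok" "1 = x + of_nat n * (of_nat f * z)"
    using restriction_unit_decomp[OF a] .
  have "1 = x + of_int (int f) * (of_nat n * z)" using xz(3) by (simp add: algebra_simps)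
  then have "comax (n * m) (a \<inter> Oq) (int f)" unfolding comax_def using xz(1) of_nat_n_mult_in_Oq[OF xz(2)] by blast
  then show ?thesis unfolding I_ord_iff using restriction_invertible[OF a] by blast
qed

text \<open>The square lets each factor of a product in \<open>a a'\<close> absorb one factor \<open>n\<close>.\<close>

lemma restriction_unit_decomp_sq:
  assumes a: "a \<in> I_ord d Ok (lat_scale (of_nat (n * f)) Ok)"
  obtains x t where "x \<in> a \<inter> Oq" "t \<in> Ok" "1 = x + of_nat n * of_nat n * t"
proof -
  obtain x z where xz: "x \<in> a \<inter> Oq" "z \<in> Ok" "1 = x + of_nat n * (of_nat f * z)"
    using restriction_unit_decomp[OF a] .
  have two: "2 - x \<in> Oq" using qf_order_diff[OF qf_order_of_int[of 2] ] xz(1) by simp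
  have "(2 - x) * x \<in> a" using I_ord_Ok_D(2)[OF a] two Oq_subset_Ok xz(1) unfolding order_stable_def by blast
  moreover have "(2 - x) * x \<in> Oq" using qf_order_mult[OF two] xz(1) by blast
  moreover have "(of_nat f * z) * (of_nat f * z) \<in> Ok" using qf_order_mult qf_order_of_nat xz(2) by blast
  moreover have "1 = (2 - x) * x + of_nat n * of_nat n * ((of_nat f * z) * (of_nat f * z))"
  proof -
    have xe: "x = 1 - of_nat n * (of_nat f * z)" using xz(3) by (simp add: algebra_simps)
    show ?thesis unfolding xe by (simp add: algebra_simps)
  qed
  ultimately show ?thesis using that by blast
qed

lemma restriction_lat_mult:
  assumes a: "a \<in> I_ord d Ok (lat_scale (of_nat (n * f)) Ok)"
    and a': "a' \<in> I_ord d Ok (lat_scale (of_nat (n * f)) Ok)"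
  shows "lat_mult a a' \<inter> Oq = lat_mult (a \<inter> Oq) (a' \<inter> Oq)"
proof
  show "lat_mult (a \<inter> Oq) (a' \<inter> Oq) \<subseteq> lat_mult a a' \<inter> Oq"
    using lat_mult_mono[of "a \<inter> Oq" a "a' \<inter> Oq" a'] lat_mult_subset[of Oq "a \<inter> Oq" "a' \<inter> Oq"]
      qf_order_add qf_order_mult by auto
next
  show "lat_mult a a' \<inter> Oq \<subseteq> lat_mult (a \<inter> Oq) (a' \<inter> Oq)"
  proof
    fix w assume w: "w \<in> lat_mult a a' \<inter> Oq"
    obtain x t where x: "x \<in> a \<inter> Oq" "t \<in> Ok" "1 = x + of_nat n * of_nat n * t"
      using restriction_unit_decomp_sq[OF a] .
    obtain x' t' where x': "x' \<in> a' \<inter> Oq" "t' \<in> Ok" "1 = x' + of_nat n * of_nat n * t'"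
      using restriction_unit_decomp_sq[OF a'] .
    define u where "u = t + t' - of_nat n * of_nat n * t * t'"
    have u: "u \<in> Ok" unfolding u_def
      using qf_order_add qf_order_diff qf_order_mult qf_order_of_nat x(2) x'(2) by meson
    have one: "1 = x * x' + of_nat n * of_nat n * u"
    proof -
      have xe: "x = 1 - of_nat n * of_nat n * t" "x' = 1 - of_nat n * of_nat n * t'" using x(3) x'(3) by linarith+
      show ?thesis unfolding u_def xe by (simp add: algebra_simps)
    qed
    have "w = w * (x * x' + of_nat n * of_nat n * u)" unfolding one[symmetric] by simp
    then have "w = (w * x) * x' + of_nat n * of_nat n * (u * w)" by (simp add: algebra_simps)
    moreover have "w * x \<in> a \<inter> Oq"
      using order_stable_restriction[OF a] w x(1) unfolding order_stable_def by blast
    then have "(w * x) * x' \<in> lat_mult (a \<inter> Oq) (a' \<inter> Oq)" using x'(1) by (rule lat_mult_prod)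
    moreover have "of_nat n * of_nat n * (u * w) \<in> lat_mult (a \<inter> Oq) (a' \<inter> Oq)"
    proof -
      have "u * 1 * w \<in> lat_mult a a'"
        using w I_ord_Ok_D(2)[OF a] u unfolding order_stable_def by (intro lat_mult_scale) auto
      then have "of_nat n * of_nat n * (u * w) \<in> lat_mult (a \<inter> Oq) (a' \<inter> Oq)"
        by (intro lat_mult_scale) (use of_nat_n_mult_in_restriction a a' in auto)
      then show ?thesis .
    qed
    ultimately show "w \<in> lat_mult (a \<inter> Oq) (a' \<inter> Oq)" using lat_mult_add by metis
  qed
qed

lemma restriction_equiv:
  assumes a: "a \<in> I_ord d Ok (lat_scale (of_nat (n * f)) Ok)"
    and equiv: "lat_equiv d (n * f) a a'"
  shows "lat_equiv d f (a \<inter> Oq) (a' \<inter> Oq)"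
proof -
  obtain c u where c: "c = of_nat (n * f) * u + 1" "u \<in> lat_inv d a" "totally_positive d c" "lat_scale c a = a'"
    using equiv unfolding lat_equiv_def by blast
  have uK: "u \<in> qf_K d" and ux: "\<And>x. x \<in> a \<Longrightarrow> u * x \<in> Ok"
    using c(2) I_ord_Ok_D(3)[OF a] unfolding lat_inv_def by auto
  have nu: "of_nat n * u \<in> lat_inv d (a \<inter> Oq)" unfolding lat_inv_def lat_End_restriction[OF a]
  proof (intro CollectI conjI ballI)
    show "of_nat n * u \<in> qf_K d" using uK qf_K_mult qf_K_of_nat by blast
    fix x assume "x \<in> a \<inter> Oq"
    then show "of_nat n * u * x \<in> Oq" using ux of_nat_n_mult_in_Oq by (simp add: mult.assoc)
  qed
  have cx: "c * x = x + of_nat n * (of_nat f * (u * x))" for x using c(1) by (simp add: algebra_simps)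
  have in_Oq_iff: "c * x \<in> Oq \<longleftrightarrow> x \<in> Oq" if "x \<in> a" for x
  proof -
    have "of_nat n * (of_nat f * (u * x)) \<in> Oq" using of_nat_n_mult_in_Oq qf_order_mult[OF qf_order_of_nat ux[OF that]] .
    then show ?thesis unfolding cx using qf_order_add qf_order_diff by (metis add_diff_cancel_right')
  qed
  have "lat_scale c (a \<inter> Oq) = a' \<inter> Oq"
    using c(4) in_Oq_iff unfolding lat_scale_def by auto
  moreover have "c = of_nat f * (of_nat n * u) + 1" using c(1) by (simp add: algebra_simps)
  ultimately show ?thesis unfolding lat_equiv_def using nu c(3) by blast
qed

end

section \<open>Surjectivity up to equivalence\<close>

context real_quadratic_field
begin

lemma exists_totally_positive_shift:
  assumes "x \<in> qf_K d" "N > 0"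
  obtains j :: int where "totally_positive d (x + of_int (N * j))"
proof -
  define j where "j = \<lceil>\<bar>x\<bar> + \<bar>qf_conj d x\<bar>\<rceil> + 1"
  have "of_int j > \<bar>x\<bar> + \<bar>qf_conj d x\<bar>" unfolding j_def by linarith
  moreover have "j > 0" unfolding j_def by (simp add: add_nonneg_pos)
  then have "1 * j \<le> N * j" using assms(2) by (intro mult_right_mono) auto
  then have "(of_int j :: real) \<le> of_int (N * j)" by linarith
  ultimately have "x + of_int (N * j) > 0" "qf_conj d x + of_int (N * j) > 0" by linarith+
  then show ?thesis using that[of j] qf_conj_add_of_int[OF assms(1), of "N * j"] unfolding totally_positive_def by argo
qed

lemma invertible_ideal_scale:
  assumes "is_invertible_ideal d R L" "c \<in> qf_K d" "c \<noteq> 0"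
  shows "is_invertible_ideal d R (lat_scale c L)"
  using assms is_lattice_scale lat_End_scale
  unfolding is_invertible_ideal_def is_ideal_def lat_scale_def by (auto simp: mult.left_commute)

lemma comax_scale:
  assumes "comax k b (int f)" and "\<forall>s\<in>b. \<exists>v\<in>qf_order d k. \<mu> * s = s + of_nat f * v"
  shows "comax k (lat_scale \<mu> b) (int f)"
proof -
  obtain x y where xy: "x \<in> b" "y \<in> qf_order d k" "1 = x + of_nat f * y" using assms(1) unfolding comax_def by auto
  obtain v where v: "v \<in> qf_order d k" "\<mu> * x = x + of_nat f * v" using assms(2) xy(1) by blast
  have "1 = \<mu> * x + of_int (int f) * (y - v)" using xy(3) v(2) by (simp add: algebra_simps)
  moreover have "\<mu> * x \<in> lat_scale \<mu> b" using xy(1) unfolding lat_scale_def by blast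
  ultimately show ?thesis unfolding comax_def using qf_order_diff[OF xy(2) v(1)] by blast
qed

lemma comax_scale_of_coprime_value:
  assumes "order_stable k b" "\<beta> \<in> b" "\<mu> * \<beta> = of_int P + of_int N * G" "G \<in> qf_order d k" "coprime P N"
  shows "comax k (lat_scale \<mu> b) N"
proof -
  obtain u v where uv: "u * P + v * N = 1"
    using bezout_int[of P N] assms(5) by (auto simp: coprime_iff_gcd_eq_1)
  have "(1::real) = of_int (u * P + v * N)" using uv by simp
  also have "\<dots> = of_int u * (of_int P + of_int N * G) + of_int N * (of_int v - of_int u * G)"
    by (simp add: algebra_simps)
  finally have "1 = \<mu> * (of_int u * \<beta>) + of_int N * (of_int v - of_int u * G)"
    unfolding assms(3)[symmetric] by (simp add: mult.left_commute)
  moreover have "of_int u * \<beta> \<in> b" using assms(1,2) qf_order_of_int unfolding order_stable_def by blast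
  then have "\<mu> * (of_int u * \<beta>) \<in> lat_scale \<mu> b" unfolding lat_scale_def by (rule imageI)
  moreover have "of_int v - of_int u * G \<in> qf_order d k"
    using assms(4) by (intro qf_order_diff qf_order_mult qf_order_of_int)
  ultimately show ?thesis unfolding comax_def by blast
qed

lemma lat_equiv_inverse_multiplier:
  assumes "\<mu> \<in> qf_K d" "totally_positive d \<mu>" "f > 0" "lat_End d b = qf_order d k"
    and congr: "\<forall>s\<in>b. \<exists>v\<in>qf_order d k. \<mu> * s = s + of_nat f * v"
  shows "lat_equiv d f (lat_scale \<mu> b) b"
proof -
  have \<mu>0: "\<mu> \<noteq> 0" using assms(2) unfolding totally_positive_def by simp
  have f0: "(of_nat f :: real) \<noteq> 0" using assms(3) by simp
  define u where "u = (inverse \<mu> - 1) / of_nat f"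
  have u: "u \<in> lat_inv d (lat_scale \<mu> b)" unfolding lat_inv_def lat_End_scale[OF \<mu>0] assms(4)
  proof (intro CollectI conjI ballI)
    show "u \<in> qf_K d" unfolding u_def using assms(1) by (intro qf_K_divide qf_K_diff qf_K_inverse qf_K_of_nat) auto
    fix w assume "w \<in> lat_scale \<mu> b"
    then obtain s v where sv: "w = \<mu> * s" "v \<in> qf_order d k" "\<mu> * s = s + of_nat f * v"
      using congr unfolding lat_scale_def by blast
    have "(inverse \<mu> - 1) * (\<mu> * s) = s - \<mu> * s" using \<mu>0 by (simp add: algebra_simps)
    then have "u * w = (s - \<mu> * s) / of_nat f" unfolding u_def sv(1) by simp
    also have "\<dots> = - v" unfolding sv(3) using f0 by simp
    finally show "u * w \<in> qf_order d k" using qf_order_uminus[OF sv(2)] by simp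
  qed
  moreover have "inverse \<mu> = of_nat f * u + 1" unfolding u_def using f0 by simp
  ultimately have "inverse \<mu> \<in> {of_nat f * u + 1 | u. u \<in> lat_inv d (lat_scale \<mu> b)}" by blast
  moreover have "totally_positive d (inverse \<mu>)"
    using assms(2) qf_conj_inverse[OF assms(1)] unfolding totally_positive_def by simp
  moreover have "lat_scale (inverse \<mu>) (lat_scale \<mu> b) = b"
    unfolding lat_scale_def image_image using \<mu>0 by (simp add: mult.assoc[symmetric])
  ultimately show ?thesis unfolding lat_equiv_def by blast
qed

end

context order_pair
begin

lemma lat_mult_Ok_basics:
  assumes B: "B \<subseteq> Oq" "add_subgroup B" "order_stable (n * m) B"
  shows "B \<subseteq> lat_mult B Ok" "lat_mult B Ok \<subseteq> Ok" "add_subgroup (lat_mult B Ok)"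
    "order_stable m (lat_mult B Ok)" "\<And>w. w \<in> lat_mult B Ok \<Longrightarrow> of_nat n * w \<in> B"
proof -
  have stB: "\<And>r x. r \<in> Oq \<Longrightarrow> x \<in> B \<Longrightarrow> r * x \<in> B" using B(3) unfolding order_stable_def by blast
  have sgB: "0 \<in> B" "\<And>x y. x \<in> B \<Longrightarrow> y \<in> B \<Longrightarrow> x + y \<in> B" "\<And>x. x \<in> B \<Longrightarrow> - x \<in> B"
    using B(2) unfolding add_subgroup_def by auto
  show "B \<subseteq> lat_mult B Ok" using lat_mult_prod[of _ B 1 Ok] qf_order_one by fastforce
  show "lat_mult B Ok \<subseteq> Ok"
    using B(1) Oq_subset_Ok qf_order_mult qf_order_add by (intro lat_mult_subset) auto
  have "1 * r * w \<in> lat_mult B Ok" if "r \<in> Ok" "w \<in> lat_mult B Ok" for r w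
    using that(2) by (rule lat_mult_scale) (use qf_order_mult[OF that(1)] in auto)
  then show "order_stable m (lat_mult B Ok)" unfolding order_stable_def by simp
  have "(- 1) * 1 * w \<in> lat_mult B Ok" if "w \<in> lat_mult B Ok" for w
    using that by (rule lat_mult_scale) (use sgB(3) in auto)
  then show "add_subgroup (lat_mult B Ok)" unfolding add_subgroup_def using lat_mult_0 lat_mult_add by force
  have "lat_mult B Ok \<subseteq> {w. of_nat n * w \<in> B}"
  proof (rule lat_mult_subset)
    fix x y assume "x \<in> B" "y \<in> Ok"
    then have "(of_nat n * y) * x \<in> B" using stB of_nat_n_mult_in_Oq by blast
    then show "x * y \<in> {w. of_nat n * w \<in> B}" by (simp add: algebra_simps)
  qed (use sgB in \<open>auto simp: distrib_left\<close>)
  then show "\<And>w. w \<in> lat_mult B Ok \<Longrightarrow> of_nat n * w \<in> B" by blast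
qed

lemma lat_End_lat_mult_Ok:
  assumes B: "is_invertible_ideal d Oq B" "B \<subseteq> Oq" and comax: "comax (n * m) B (int (n * f))"
  shows "lat_End d (lat_mult B Ok) = Ok"
proof
  have latB: "is_lattice d B" and stB: "order_stable (n * m) B" and EndB: "lat_End d B = Oq"
    using B(1) order_stable_if_is_ideal unfolding is_invertible_ideal_def is_ideal_def by auto
  note P = lat_mult_Ok_basics[OF B(2) is_lattice_D(1)[OF latB] stB]
  show "Ok \<subseteq> lat_End d (lat_mult B Ok)"
    unfolding lat_End_def using qf_order_subset_qf_K P(4) unfolding order_stable_def by blast
  show "lat_End d (lat_mult B Ok) \<subseteq> Ok"
  proof
    fix c assume "c \<in> lat_End d (lat_mult B Ok)"
    then have cK: "c \<in> qf_K d" and cA: "\<And>w. w \<in> lat_mult B Ok \<Longrightarrow> c * w \<in> lat_mult B Ok"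
      unfolding lat_End_def by auto
    obtain x y where xy: "x \<in> B" "y \<in> Oq" "1 = x + of_nat n * (of_nat f * y)"
      using comax unfolding comax_def by (auto simp: mult.assoc)
    have fy: "of_nat f * y \<in> Ok" using qf_order_mult[OF qf_order_of_nat] xy(2) Oq_subset_Ok by blast
    have "of_nat n * c \<in> lat_End d B" unfolding lat_End_def
    proof (intro CollectI conjI ballI)
      show "of_nat n * c \<in> qf_K d" using cK qf_K_mult qf_K_of_nat by blast
      fix s assume "s \<in> B"
      then show "of_nat n * c * s \<in> B" using P(5) cA P(1) by (auto simp: mult.assoc)
    qed
    then have "of_nat n * c \<in> Ok" using EndB Oq_subset_Ok by blast
    then have "c * x + (of_nat n * c) * (of_nat f * y) \<in> Ok"
      using cA xy(1) P(1,2) qf_order_add qf_order_mult[OF _ fy] by blast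
    moreover have "c = c * (x + of_nat n * (of_nat f * y))" using xy(3) by simp
    then have "c = c * x + (of_nat n * c) * (of_nat f * y)" by (simp add: algebra_simps)
    ultimately show "c \<in> Ok" by simp
  qed
qed

lemma extension_to_Ok:
  assumes B: "is_invertible_ideal d Oq B" "B \<subseteq> Oq" and comax: "comax (n * m) B (int (n * f))"
  shows "lat_mult B Ok \<in> I_ord d Ok (lat_scale (of_nat (n * f)) Ok)" "lat_mult B Ok \<inter> Oq = B"
proof -
  define A where "A = lat_mult B Ok"
  have latB: "is_lattice d B" and stB: "order_stable (n * m) B"
    using B(1) order_stable_if_is_ideal unfolding is_invertible_ideal_def is_ideal_def by auto
  note P = lat_mult_Ok_basics[OF B(2) is_lattice_D(1)[OF latB] stB, folded A_def]
  obtain x y where xy: "x \<in> B" "y \<in> Oq" "1 = x + of_nat n * (of_nat f * y)"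
    using comax unfolding comax_def by (auto simp: mult.assoc)
  have fy: "of_nat f * y \<in> Ok" using qf_order_mult[OF qf_order_of_nat] xy(2) Oq_subset_Ok by blast
  have stA: "\<And>r w. r \<in> Ok \<Longrightarrow> w \<in> A \<Longrightarrow> r * w \<in> A" using P(4) unfolding order_stable_def by blast
  obtain z where "z \<in> B" "z \<noteq> 0" using is_lattice_D(3)[OF latB] by blast
  then have latA: "is_lattice d A" using is_lattice_if_order_stable[OF _ P(2,3,4)] P(1) m_pos by auto
  have "lat_End d A = Ok" unfolding A_def by (rule lat_End_lat_mult_Ok[OF B comax])
  moreover have "comax m A (int (n * f))"
  proof -
    have "1 = x + of_int (int (n * f)) * y" using xy(3) by (simp add: algebra_simps)
    then show ?thesis unfolding comax_def using xy(1,2) P(1) Oq_subset_Ok by blast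
  qed
  ultimately show "A \<in> I_ord d Ok (lat_scale (of_nat (n * f)) Ok)"
    unfolding I_ord_iff is_invertible_ideal_def is_ideal_def using latA stA P(2) by blast
  show "A \<inter> Oq = B"
  proof
    show "A \<inter> Oq \<subseteq> B"
    proof
      fix w assume w: "w \<in> A \<inter> Oq"
      have "w = w * (x + of_nat n * (of_nat f * y))" using xy(3) by simp
      then have "w = w * x + of_nat n * ((of_nat f * y) * w)" by (simp add: algebra_simps)
      moreover have "w * x \<in> B" using stB w xy(1) unfolding order_stable_def by blast
      moreover have "of_nat n * ((of_nat f * y) * w) \<in> B" using P(5) stA fy w by blast
      moreover have "\<And>u v. u \<in> B \<Longrightarrow> v \<in> B \<Longrightarrow> u + v \<in> B"
        using is_lattice_D(1)[OF latB] unfolding add_subgroup_def by blast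
      ultimately show "w \<in> B" by metis
    qed
  qed (use P(1) B(2) in blast)
qed

text \<open>The multiplier is \<open>\<mu> = 1 + f e (\<rho> - 1) + f n\<^sub>2 j\<close> with \<open>e f \<equiv> 1 (mod n\<^sub>2)\<close>: it is \<open>\<equiv> 1\<close> modulo
  \<open>f\<close> on \<open>b\<close>, maps \<open>\<beta>\<close> to \<open>f e Q\<close> modulo \<open>n\<^sub>2\<close>, and \<open>j\<close> is chosen to make it totally positive.\<close>

lemma exists_totally_positive_multiplier:
  assumes b: "b \<in> I_ord d Oq (lat_scale (of_nat f) Oq)" and n2: "n2 > 0" "coprime n2 f"
  obtains \<mu> where "\<mu> \<in> qf_K d" "totally_positive d \<mu>" "\<forall>s\<in>b. \<exists>v\<in>Oq. \<mu> * s = s + of_nat f * v"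
    "comax (n * m) (lat_scale \<mu> b) (int n2)"
proof -
  have bI: "is_invertible_ideal d Oq b" "b \<subseteq> Oq" using b unfolding I_ord_iff by auto
  obtain \<rho> \<beta> Q where \<rho>: "\<rho> \<in> qf_K d" "\<beta> \<in> b" "\<rho> * \<beta> = of_int Q" "coprime Q (int n2)"
    "\<forall>s\<in>b. \<rho> * s \<in> Oq"
    using invertible_ideal_represents_coprime[OF _ bI, of "int n2"] n_pos m_pos n2(1) by auto
  obtain e h where eh: "e * int f + h * int n2 = 1"
    using bezout_int[of "int f" "int n2"] n2(2) by (auto simp: coprime_commute coprime_iff_gcd_eq_1)
  define \<mu>0 where "\<mu>0 = 1 + of_int (int f * e) * (\<rho> - 1)"
  have "\<mu>0 \<in> qf_K d" unfolding \<mu>0_def using \<rho>(1) by (intro qf_K_add qf_K_mult qf_K_diff qf_K_of_int) auto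
  moreover have "int f * int n2 > 0" using f_pos n2(1) by simp
  ultimately obtain j where tp: "totally_positive d (\<mu>0 + of_int (int f * int n2 * j))"
    by (rule exists_totally_positive_shift)
  define \<mu> where "\<mu> = \<mu>0 + of_int (int f * int n2 * j)"
  define V where "V s = of_int e * (\<rho> * s - s) + of_int (int n2 * j) * s" for s
  have V: "V s \<in> Oq" if "s \<in> b" for s
    unfolding V_def using that \<rho>(5) bI(2)
    by (intro qf_order_add qf_order_mult[OF qf_order_of_int] qf_order_diff) auto
  have \<mu>s: "\<mu> * s = s + of_nat f * V s" for s unfolding \<mu>_def \<mu>0_def V_def by (simp add: algebra_simps)
  have "comax (n * m) (lat_scale \<mu> b) (int n2)"
  proof (rule comax_scale_of_coprime_value)
    show "order_stable (n * m) b" using bI(1) order_stable_if_is_ideal unfolding is_invertible_ideal_def by blast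
    have "\<mu> * \<beta> = of_int (int f * e * Q) + (1 - of_int (e * int f)) * \<beta> + of_int (int f * int n2 * j) * \<beta>"
      unfolding \<mu>_def \<mu>0_def using \<rho>(3) by (simp add: algebra_simps)
    also have "(1 - of_int (e * int f)) = (of_int (h * int n2) :: real)"
      using eh by (metis add_diff_cancel_left' of_int_1 of_int_add)
    finally show "\<mu> * \<beta> = of_int (int f * e * Q) + of_int (int n2) * (of_int h * \<beta> + of_int (int f * j) * \<beta>)"
      by (simp add: algebra_simps)
    show "of_int h * \<beta> + of_int (int f * j) * \<beta> \<in> Oq"
      using \<rho>(2) bI(2) by (intro qf_order_add qf_order_mult qf_order_of_int) auto
    have "coprime (int f * e) (int n2)"
    proof (rule coprimeI)
      fix c assume "c dvd int f * e" "c dvd int n2"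
      then have "c dvd e * int f + h * int n2" by (simp add: mult.commute)
      then show "is_unit c" using eh by simp
    qed
    then show "coprime (int f * e * Q) (int n2)" using \<rho>(4) by simp
  qed (use \<rho>(2) in blast)
  moreover have "\<mu> \<in> qf_K d" unfolding \<mu>_def using \<open>\<mu>0 \<in> qf_K d\<close> qf_K_add qf_K_of_int by blast
  ultimately show ?thesis using that tp \<mu>s V unfolding \<mu>_def by blast
qed

lemma exists_restriction_equiv:
  assumes b: "b \<in> I_ord d Oq (lat_scale (of_nat f) Oq)"
  shows "\<exists>a\<in>I_ord d Ok (lat_scale (of_nat (n * f)) Ok). lat_equiv d f (a \<inter> Oq) b"
proof -
  obtain n1 n2 k where split: "n = n1 * n2" "coprime n2 f" "n1 dvd f ^ k"
    using nat_split_coprime_part[OF n_pos, of f] by blast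
  then have "n2 > 0" using n_pos by (simp add: gr0I)
  obtain \<mu> where \<mu>: "\<mu> \<in> qf_K d" "totally_positive d \<mu>" "\<forall>s\<in>b. \<exists>v\<in>Oq. \<mu> * s = s + of_nat f * v"
    "comax (n * m) (lat_scale \<mu> b) (int n2)"
    using exists_totally_positive_multiplier[OF b \<open>n2 > 0\<close> split(2)] by blast
  have \<mu>0: "\<mu> \<noteq> 0" using \<mu>(2) unfolding totally_positive_def by simp
  have bI: "is_invertible_ideal d Oq b" "b \<subseteq> Oq" "comax (n * m) b (int f)" using b unfolding I_ord_iff by auto
  define B where "B = lat_scale \<mu> b"
  have BI: "is_invertible_ideal d Oq B" unfolding B_def by (rule invertible_ideal_scale[OF bI(1) \<mu>(1) \<mu>0])
  have "B \<subseteq> Oq"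
  proof
    fix w assume "w \<in> B"
    then obtain s where "s \<in> b" "w = \<mu> * s" unfolding B_def lat_scale_def by blast
    then obtain v where v: "v \<in> Oq" "w = s + of_nat f * v" using \<mu>(3) by blast
    have "s \<in> Oq" using \<open>s \<in> b\<close> bI(2) by blast
    then show "w \<in> Oq" unfolding v(2) by (rule qf_order_add[OF _ qf_order_mult[OF qf_order_of_nat v(1)]])
  qed
  have sg: "add_subgroup B" using BI is_lattice_D(1) unfolding is_invertible_ideal_def is_ideal_def by blast
  have st: "order_stable (n * m) B" using BI order_stable_if_is_ideal unfolding is_invertible_ideal_def by blast
  have comax_f: "comax (n * m) B (int f)" unfolding B_def by (rule comax_scale[OF bI(3) \<mu>(3)])
  note comax_rule = comax_mult[OF \<open>B \<subseteq> Oq\<close> sg st]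
  have "comax (n * m) B (int f ^ k)" by (rule comax_power[OF \<open>B \<subseteq> Oq\<close> sg st comax_f])
  moreover have "int n1 dvd int f ^ k" using split(3) by (simp add: of_nat_power[symmetric] del: of_nat_power)
  ultimately have "comax (n * m) B (int n1)" by (rule comax_dvd)
  then have "comax (n * m) B (int n1 * int n2 * int f)"
    by (rule comax_rule[OF comax_rule[OF _ \<mu>(4)[folded B_def]] comax_f])
  then have "comax (n * m) B (int (n * f))" using split(1) by simp
  then have "lat_mult B Ok \<in> I_ord d Ok (lat_scale (of_nat (n * f)) Ok)" "lat_mult B Ok \<inter> Oq = B"
    using extension_to_Ok[OF BI \<open>B \<subseteq> Oq\<close>] by blast+
  moreover have "lat_End d b = Oq" using bI(1) unfolding is_invertible_ideal_def by blast
  then have "lat_equiv d f B b"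
    unfolding B_def using lat_equiv_inverse_multiplier[OF \<mu>(1,2) _ _ \<mu>(3)] f_pos by simp
  ultimately show ?thesis by (intro bexI[of _ "lat_mult B Ok"]) simp_all
qed

end

theorem proposition2p1:
  fixes d :: int and n f m :: nat
  assumes "d > 1" and "squarefree d"
    and "n \<ge> 1" and "f \<ge> 1" and "m \<ge> 1"
  defines "Ok \<equiv> qf_order d m" and "Oq \<equiv> qf_order d (n * m)"
  shows "(\<forall>a \<in> I_ord d Ok (lat_scale (of_nat (n * f)) Ok).
            is_invertible_ideal d Oq (a \<inter> Oq)
          \<and> a \<inter> Oq \<in> I_ord d Oq (lat_scale (of_nat f) Oq))
    \<and> (\<forall>a \<in> I_ord d Ok (lat_scale (of_nat (n * f)) Ok).
         \<forall>a' \<in> I_ord d Ok (lat_scale (of_nat (n * f)) Ok).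
            lat_mult a a' \<inter> Oq = lat_mult (a \<inter> Oq) (a' \<inter> Oq))
    \<and> (\<forall>a \<in> I_ord d Ok (lat_scale (of_nat (n * f)) Ok).
         \<forall>a' \<in> I_ord d Ok (lat_scale (of_nat (n * f)) Ok).
            lat_equiv d (n * f) a a' \<longrightarrow> lat_equiv d f (a \<inter> Oq) (a' \<inter> Oq))
    \<and> (\<forall>b \<in> I_ord d Oq (lat_scale (of_nat f) Oq).
         \<exists>a \<in> I_ord d Ok (lat_scale (of_nat (n * f)) Ok). lat_equiv d f (a \<inter> Oq) b)"
proof -
  interpret order_pair d n f m
    using assms by unfold_locales auto
  show ?thesis
    unfolding Ok_def Oq_def
    by (intro conjI ballI impI restriction_invertible restriction_in_I_ord restriction_lat_mult
        restriction_equiv exists_restriction_equiv)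
qed

end
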